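(* Let $1\le p<\infty$, $\theta,\rho\in(0,1)$, $\Omega\in\mathbb{IR}^{d_0}$ a box with nonempty interior, and $\Phi:\mathbb R^{d_0}\to\mathbb R^{d_{L+1}}$ a feedforward neural network with twice differentiable activation $\sigma$ such that $\sigma,\sigma',\sigma''$ admit interval enclosures $\Sigma,\Sigma',\Sigma''$ that are Hölder continuous on $\mathbb{IR}$. Define $f_{\Phi,2,p}(x)=\sum_{i=1}^{d_{L+1}}\sum_{|\alpha|\le2}|D^\alpha\Phi_i(x)|^p$ and $$F_{\Phi,2,p}(K)=\sum_{i=1}^{d_{L+1}}\Big(|\mathrm{Fval}_{\Phi,L+1,\Sigma}(K)_i|^p+\sum_{j=1}^{d_0}|\mathrm{Jac}_{\Phi,0}(K)_{ij}|^p+\sum_{1\le j\le k\le d_0}|\mathrm{Hess}_{\Phi,i,0}(K)_{jk}|^p\Big).$$ Then $f_{\Phi,2,p}$ is continuous, $F_{\Phi,2,p}$ is a Hölder continuous interval enclosure of $f_{\Phi,2,p}$ on $\Omega$, and AdaQuad with integrand $f_{\Phi,2,p}$, enclosure $F_{\Phi,2,p}$, a positive-weight quadrature rule exact for constants, marking $\mathrm{D\ddot orfler}_\theta$ and refinement $\mathrm{H\ddot older}_\rho$ yields for all $n$ $$\big|\,\|\Phi\|_{W^{2,p}(\Omega;\mathbb R^{d_{L+1}})}-\mathrm Q_n^{1/p}\big|\le\eta_n^{1/p},\qquad\eta_{n+1}\le(1-\theta(1-\rho))\eta_n.$$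
   Context: $\|\Phi\|_{W^{k,p}(\Omega;\mathbb R^m)}=(\sum_{i=1}^m\sum_{|\alpha|\le k}\int_\Omega|D^\alpha\Phi_i|^pdx)^{1/p}$, sum over multi-indices each once. Intervals, boxes, interval arithmetic $X\circ Y=\{x\circ y\}$, interval matrix products via usual formula (left to right), $\odot$ entrywise; width $w$ (max entry width); $|X|=\{|x|:x\in X\}$, $X^\gamma=[\underline X^\gamma,\overline X^\gamma]$ for $\underline X\ge0$. Interval enclosure on $\Omega$: inclusion isotonic $F$ with $\phi(K)\subset F(K)$ for boxes $K\subset\Omega$; Hölder continuous: $w(F(K))\le Cw(K)^\gamma$. Network: weights $W^{(\ell)}$, biases $b^{(\ell)}$, $z^{(\ell)}=W^{(\ell-1)}x^{(\ell-1)}+b^{(\ell-1)}$, $x^{(\ell)}=\sigma(z^{(\ell)})$, $x^{(0)}=u$, $\Phi=z^{(L+1)}$. $\mathrm{Fval}_{\Phi,\ell,\Sigma}(K)$: $X^{(0)}=K$; for $k=0,\dots,\ell-1$: $Z^{(k+1)}=W^{(k)}X^{(k)}+b^{(k)}$, $X^{(k+1)}=\Sigma(Z^{(k+1)})$; return $Z^{(\ell)}$. $\mathrm{Jac}_{\Phi,\ell}(K)$: $J^{(L)}=W^{(L)}$; for $k=L-1,\dots,\ell$: $J^{(k)}=(J^{(k+1)}\mathrm{diag}(\Sigma'(\mathrm{Fval}_{\Phi,k+1,\Sigma}(K))))W^{(k)}$; return $J^{(\ell)}$. $\mathrm{Hess}_{\Phi,i,\ell}(K)$: $H^{(L)}=0$;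 for $k=L-1,\dots,\ell$, with $Z^{(k+1)}=\mathrm{Fval}_{\Phi,k+1,\Sigma}(K)$, $J_i^{(k+1)}$ the $i$-th row of $\mathrm{Jac}_{\Phi,k+1}(K)$: $H^{(k)}=W^{(k)T}\mathrm{diag}(\Sigma'(Z^{(k+1)}))H^{(k+1)}\mathrm{diag}(\Sigma'(Z^{(k+1)}))W^{(k)}+W^{(k)T}\mathrm{diag}(\Sigma''(Z^{(k+1)})\odot J_i^{(k+1)})W^{(k)}$; return $H^{(\ell)}$. AdaQuad: $\mathcal P_0=\{\Omega\}$; with $\eta_K=w(F(K))\mathrm{vol}(K)$, $\mathcal P_{n+1}=(\mathcal P_n\setminus\widetilde{\mathcal P}_n)\cup\bigcup_{K\in\widetilde{\mathcal P}_n}\mathcal R(K)$ with $\widetilde{\mathcal P}_n$ the marked set; $\mathrm Q_n=\sum_{K\in\mathcal P_n}\mathcal I(f,K)$, $\eta_n=\sum_{K\in\mathcal P_n}\eta_K$. Quadrature $\mathcal I(f,K)=\sum_iw_if(x_i)$, $x_i\in K$, $w_i>0$, $\sum w_i=\mathrm{vol}(K)$. $\mathrm{D\ddot orfler}_\theta$: repeatedly mark all unmarked elements of maximal indicator until the marked sum is $\ge\theta$ times the total. $\mathrm{H\ddot older}_\rho(K)$ with a Hölder constant $C$ and exponent $\gamma$ of $F$: if $\eta_K=0$ return $\{K\}$; else split each side $K_i$ (length $l_i$) uniformly into $m_i=\lceil l_i(C\mathrm{vol}(K)/(\rho\eta_K))^{1/\gamma}\rceil$ pieces and return all product boxes. 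*)

theory Defs
  imports "HOL-Analysis.Analysis" "HOL-Library.Interval"
begin

(* Conventions: all indices are 0-based.  Vectors in R^n are functions nat => real,
   only the entries < n being relevant; matrices are nat => nat => _ .
   A box in IR^n is a function nat => real interval (entries < n relevant). *)

type_synonym ivl = "real interval"
type_synonym ibox = "nat \<Rightarrow> real interval"
type_synonym imat = "nat \<Rightarrow> nat \<Rightarrow> real interval"

definition box_pts :: "nat \<Rightarrow> ibox \<Rightarrow> (nat \<Rightarrow> real) set" where
  "box_pts n K = {x. \<forall>j<n. x j \<in> set_of (K j)}"

definition box_sub :: "nat \<Rightarrow> ibox \<Rightarrow> ibox \<Rightarrow> bool" where
  "box_sub n K K' \<longleftrightarrow> (\<forall>j<n. set_of (K j) \<subseteq> set_of (K' j))"

definition box_width :: "nat \<Rightarrow> ibox \<Rightarrow> real" where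
  "box_width n K = (MAX j\<in>{..<n}. width (K j))"

definition box_vol :: "nat \<Rightarrow> ibox \<Rightarrow> real" where
  "box_vol n K = (\<Prod>j<n. width (K j))"

(* X^gamma = [lower X ^gamma, upper X ^gamma] for X >= 0 *)
definition ipowr :: "ivl \<Rightarrow> real \<Rightarrow> ivl" where
  "ipowr X g = Ivl (lower X powr g) (upper X powr g)"

definition imat_mult :: "nat \<Rightarrow> imat \<Rightarrow> imat \<Rightarrow> imat" where
  "imat_mult n A B = (\<lambda>i k. \<Sum>j<n. A i j * B j k)"

definition imat_add :: "imat \<Rightarrow> imat \<Rightarrow> imat" where
  "imat_add A B = (\<lambda>i k. A i k + B i k)"

definition idiag :: "(nat \<Rightarrow> ivl) \<Rightarrow> imat" where
  "idiag v = (\<lambda>i j. if i = j then v i else 0)"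

definition ireal_mat :: "(nat \<Rightarrow> nat \<Rightarrow> real) \<Rightarrow> imat" where
  "ireal_mat A = (\<lambda>i j. interval_of (A i j))"

definition itrans :: "imat \<Rightarrow> imat" where
  "itrans A = (\<lambda>i j. A j i)"

definition ienclosure_R :: "(ivl \<Rightarrow> ivl) \<Rightarrow> (real \<Rightarrow> real) \<Rightarrow> bool" where
  "ienclosure_R S s \<longleftrightarrow>
     (\<forall>X Y. set_of X \<subseteq> set_of Y \<longrightarrow> set_of (S X) \<subseteq> set_of (S Y)) \<and>
     (\<forall>X. s ` set_of X \<subseteq> set_of (S X))"

definition holder_R :: "(ivl \<Rightarrow> ivl) \<Rightarrow> bool" where
  "holder_R S \<longleftrightarrow> (\<exists>C g. 0 \<le> C \<and> 0 < g \<and> (\<forall>X. width (S X) \<le> C * width X powr g))"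

definition enclosure_on :: "nat \<Rightarrow> ibox \<Rightarrow> ((nat \<Rightarrow> real) \<Rightarrow> real) \<Rightarrow> (ibox \<Rightarrow> ivl) \<Rightarrow> bool" where
  "enclosure_on n \<Omega> f F \<longleftrightarrow>
     (\<forall>K K'. box_sub n K K' \<and> box_sub n K' \<Omega> \<longrightarrow> set_of (F K) \<subseteq> set_of (F K')) \<and>
     (\<forall>K. box_sub n K \<Omega> \<longrightarrow> f ` box_pts n K \<subseteq> set_of (F K))"

definition holder_on :: "nat \<Rightarrow> ibox \<Rightarrow> (ibox \<Rightarrow> ivl) \<Rightarrow> real \<Rightarrow> real \<Rightarrow> bool" where
  "holder_on n \<Omega> F C g \<longleftrightarrow> 0 \<le> C \<and> 0 < g \<and>
     (\<forall>K. box_sub n K \<Omega> \<longrightarrow> width (F K) \<le> C * box_width n K powr g)"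

(* widths d k (k = 0..L+1), weights W k (d(k+1) x d k matrix), biases b k *)
primrec nn_x :: "(real \<Rightarrow> real) \<Rightarrow> (nat \<Rightarrow> nat) \<Rightarrow> (nat \<Rightarrow> nat \<Rightarrow> nat \<Rightarrow> real) \<Rightarrow>
    (nat \<Rightarrow> nat \<Rightarrow> real) \<Rightarrow> nat \<Rightarrow> (nat \<Rightarrow> real) \<Rightarrow> (nat \<Rightarrow> real)" where
  "nn_x s d W b 0 u = u"
| "nn_x s d W b (Suc k) u =
     (\<lambda>i. s ((\<Sum>j<d k. W k i j * nn_x s d W b k u j) + b k i))"

(* z^(k+1) = W^(k) x^(k) + b^(k) *)
definition nn_z :: "(real \<Rightarrow> real) \<Rightarrow> (nat \<Rightarrow> nat) \<Rightarrow> (nat \<Rightarrow> nat \<Rightarrow> nat \<Rightarrow> real) \<Rightarrow>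
    (nat \<Rightarrow> nat \<Rightarrow> real) \<Rightarrow> nat \<Rightarrow> (nat \<Rightarrow> real) \<Rightarrow> (nat \<Rightarrow> real)" where
  "nn_z s d W b k u = (\<lambda>i. (\<Sum>j<d k. W k i j * nn_x s d W b k u j) + b k i)"

definition nn :: "(real \<Rightarrow> real) \<Rightarrow> (nat \<Rightarrow> nat) \<Rightarrow> (nat \<Rightarrow> nat \<Rightarrow> nat \<Rightarrow> real) \<Rightarrow>
    (nat \<Rightarrow> nat \<Rightarrow> real) \<Rightarrow> nat \<Rightarrow> (nat \<Rightarrow> real) \<Rightarrow> (nat \<Rightarrow> real)" where
  "nn s d W b L = nn_z s d W b L"

primrec fval_x :: "(ivl \<Rightarrow> ivl) \<Rightarrow> (nat \<Rightarrow> nat) \<Rightarrow> (nat \<Rightarrow> nat \<Rightarrow> nat \<Rightarrow> real) \<Rightarrow>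
    (nat \<Rightarrow> nat \<Rightarrow> real) \<Rightarrow> nat \<Rightarrow> ibox \<Rightarrow> ibox" where
  "fval_x S d W b 0 K = K"
| "fval_x S d W b (Suc k) K =
     (\<lambda>i. S ((\<Sum>j<d k. interval_of (W k i j) * fval_x S d W b k K j) + interval_of (b k i)))"

(* Fval_{Phi,l,Sigma}(K) = Z^(l), for l >= 1 *)
definition Fval :: "(ivl \<Rightarrow> ivl) \<Rightarrow> (nat \<Rightarrow> nat) \<Rightarrow> (nat \<Rightarrow> nat \<Rightarrow> nat \<Rightarrow> real) \<Rightarrow>
    (nat \<Rightarrow> nat \<Rightarrow> real) \<Rightarrow> nat \<Rightarrow> ibox \<Rightarrow> ibox" where
  "Fval S d W b l K = (\<lambda>i. (\<Sum>j<d (l - 1). interval_of (W (l - 1) i j) * fval_x S d W b (l - 1) K j)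
       + interval_of (b (l - 1) i))"

(* jac_steps m K = J^(L-m) *)
primrec jac_steps :: "(ivl \<Rightarrow> ivl) \<Rightarrow> (ivl \<Rightarrow> ivl) \<Rightarrow> (nat \<Rightarrow> nat) \<Rightarrow>
    (nat \<Rightarrow> nat \<Rightarrow> nat \<Rightarrow> real) \<Rightarrow> (nat \<Rightarrow> nat \<Rightarrow> real) \<Rightarrow> nat \<Rightarrow> nat \<Rightarrow> ibox \<Rightarrow> imat" where
  "jac_steps S S1 d W b L 0 K = ireal_mat (W L)"
| "jac_steps S S1 d W b L (Suc m) K =
     (let k = L - Suc m in
      imat_mult (d (k + 1))
        (imat_mult (d (k + 1)) (jac_steps S S1 d W b L m K)
           (idiag (\<lambda>a. S1 (Fval S d W b (k + 1) K a))))
        (ireal_mat (W k)))"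

(* Jac_{Phi,l}(K) for l <= L *)
definition Jac :: "(ivl \<Rightarrow> ivl) \<Rightarrow> (ivl \<Rightarrow> ivl) \<Rightarrow> (nat \<Rightarrow> nat) \<Rightarrow>
    (nat \<Rightarrow> nat \<Rightarrow> nat \<Rightarrow> real) \<Rightarrow> (nat \<Rightarrow> nat \<Rightarrow> real) \<Rightarrow> nat \<Rightarrow> nat \<Rightarrow> ibox \<Rightarrow> imat" where
  "Jac S S1 d W b L l K = jac_steps S S1 d W b L (L - l) K"

(* hess_steps i m K = H^(L-m) for output component i *)
primrec hess_steps :: "(ivl \<Rightarrow> ivl) \<Rightarrow> (ivl \<Rightarrow> ivl) \<Rightarrow> (ivl \<Rightarrow> ivl) \<Rightarrow> (nat \<Rightarrow> nat) \<Rightarrow>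
    (nat \<Rightarrow> nat \<Rightarrow> nat \<Rightarrow> real) \<Rightarrow> (nat \<Rightarrow> nat \<Rightarrow> real) \<Rightarrow> nat \<Rightarrow> nat \<Rightarrow> nat \<Rightarrow> ibox \<Rightarrow> imat" where
  "hess_steps S S1 S2 d W b L i 0 K = (\<lambda>_ _. 0)"
| "hess_steps S S1 S2 d W b L i (Suc m) K =
     (let k = L - Suc m; n = d (k + 1); Z = Fval S d W b (k + 1) K;
          D = idiag (\<lambda>a. S1 (Z a)); Wm = ireal_mat (W k); Wt = itrans Wm;
          Ji = (\<lambda>a. Jac S S1 d W b L (k + 1) K i a)
      in imat_add
          (imat_mult n (imat_mult n (imat_mult n (imat_mult n Wt D) (hess_steps S S1 S2 d W b L i m K)) D) Wm)
          (imat_mult n (imat_mult n Wt (idiag (\<lambda>a. S2 (Z a) * Ji a))) Wm))"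

(* Hess_{Phi,i,l}(K) for l <= L *)
definition Hess :: "(ivl \<Rightarrow> ivl) \<Rightarrow> (ivl \<Rightarrow> ivl) \<Rightarrow> (ivl \<Rightarrow> ivl) \<Rightarrow> (nat \<Rightarrow> nat) \<Rightarrow>
    (nat \<Rightarrow> nat \<Rightarrow> nat \<Rightarrow> real) \<Rightarrow> (nat \<Rightarrow> nat \<Rightarrow> real) \<Rightarrow> nat \<Rightarrow> nat \<Rightarrow> nat \<Rightarrow> ibox \<Rightarrow> imat" where
  "Hess S S1 S2 d W b L i l K = hess_steps S S1 S2 d W b L i (L - l) K"

definition F_enc :: "(ivl \<Rightarrow> ivl) \<Rightarrow> (ivl \<Rightarrow> ivl) \<Rightarrow> (ivl \<Rightarrow> ivl) \<Rightarrow> (nat \<Rightarrow> nat) \<Rightarrow>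
    (nat \<Rightarrow> nat \<Rightarrow> nat \<Rightarrow> real) \<Rightarrow> (nat \<Rightarrow> nat \<Rightarrow> real) \<Rightarrow> nat \<Rightarrow> real \<Rightarrow> ibox \<Rightarrow> ivl" where
  "F_enc S S1 S2 d W b L p K =
     (\<Sum>i<d (L + 1).
        ipowr (abs_interval (Fval S d W b (L + 1) K i)) p
      + (\<Sum>j<d 0. ipowr (abs_interval (Jac S S1 d W b L 0 K i j)) p)
      + (\<Sum>(j, k)\<in>{(j, k). j \<le> k \<and> k < d 0}. ipowr (abs_interval (Hess S S1 S2 d W b L i 0 K j k)) p))"

definition partial :: "nat \<Rightarrow> ((nat \<Rightarrow> real) \<Rightarrow> real) \<Rightarrow> ((nat \<Rightarrow> real) \<Rightarrow> real)" where
  "partial j g = (\<lambda>x. deriv (\<lambda>t. g (x(j := t))) (x j))"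

definition multiidx :: "nat \<Rightarrow> nat \<Rightarrow> (nat \<Rightarrow> nat) set" where
  "multiidx n k = {\<alpha>. (\<forall>j\<ge>n. \<alpha> j = 0) \<and> (\<Sum>j<n. \<alpha> j) \<le> k}"

definition Dalpha :: "nat \<Rightarrow> (nat \<Rightarrow> nat) \<Rightarrow> ((nat \<Rightarrow> real) \<Rightarrow> real) \<Rightarrow> ((nat \<Rightarrow> real) \<Rightarrow> real)" where
  "Dalpha n \<alpha> g = fold (\<lambda>j h. (partial j ^^ \<alpha> j) h) [0..<n] g"

definition lebesgue_n :: "nat \<Rightarrow> (nat \<Rightarrow> real) measure" where
  "lebesgue_n n = PiM {..<n} (\<lambda>_. lborel)"

definition sobolev_norm :: "nat \<Rightarrow> nat \<Rightarrow> real \<Rightarrow> nat \<Rightarrow> ibox \<Rightarrow> ((nat \<Rightarrow> real) \<Rightarrow> (nat \<Rightarrow> real)) \<Rightarrow> real" where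
  "sobolev_norm n k p m \<Omega> \<Phi> =
     (\<Sum>i<m. \<Sum>\<alpha>\<in>multiidx n k.
        integral\<^sup>L (lebesgue_n n)
          (\<lambda>x. indicator (box_pts n \<Omega>) x * \<bar>Dalpha n \<alpha> (\<lambda>u. \<Phi> u i) x\<bar> powr p)) powr (1 / p)"

definition f_sob :: "nat \<Rightarrow> nat \<Rightarrow> real \<Rightarrow> nat \<Rightarrow> ((nat \<Rightarrow> real) \<Rightarrow> (nat \<Rightarrow> real)) \<Rightarrow> (nat \<Rightarrow> real) \<Rightarrow> real" where
  "f_sob n k p m \<Phi> x = (\<Sum>i<m. \<Sum>\<alpha>\<in>multiidx n k. \<bar>Dalpha n \<alpha> (\<lambda>u. \<Phi> u i) x\<bar> powr p)"

(* quadrature rule: for each box a list of (weight, node) *)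
definition is_quad_rule :: "nat \<Rightarrow> ibox \<Rightarrow> (ibox \<Rightarrow> (real \<times> (nat \<Rightarrow> real)) list) \<Rightarrow> bool" where
  "is_quad_rule n \<Omega> Q \<longleftrightarrow> (\<forall>K. box_sub n K \<Omega> \<longrightarrow>
     (\<forall>(w, x)\<in>set (Q K). 0 < w \<and> x \<in> box_pts n K) \<and> (\<Sum>(w, x)\<leftarrow>Q K. w) = box_vol n K)"

definition quad :: "(ibox \<Rightarrow> (real \<times> (nat \<Rightarrow> real)) list) \<Rightarrow> ((nat \<Rightarrow> real) \<Rightarrow> real) \<Rightarrow> ibox \<Rightarrow> real" where
  "quad Q f K = (\<Sum>(w, x)\<leftarrow>Q K. w * f x)"

definition eta :: "nat \<Rightarrow> (ibox \<Rightarrow> ivl) \<Rightarrow> ibox \<Rightarrow> real" where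
  "eta n F K = width (F K) * box_vol n K"

definition dorfler_step :: "('b \<Rightarrow> real) \<Rightarrow> 'b set \<Rightarrow> 'b set \<Rightarrow> 'b set" where
  "dorfler_step \<eta> P M = M \<union> {K \<in> P - M. \<eta> K = Max (\<eta> ` (P - M))}"

definition dorfler :: "real \<Rightarrow> ('b \<Rightarrow> real) \<Rightarrow> 'b set \<Rightarrow> 'b set" where
  "dorfler \<theta> \<eta> P = (dorfler_step \<eta> P ^^
      (LEAST k. \<theta> * sum \<eta> P \<le> sum \<eta> ((dorfler_step \<eta> P ^^ k) {}))) {}"

definition holder_refine :: "nat \<Rightarrow> real \<Rightarrow> real \<Rightarrow> real \<Rightarrow> (ibox \<Rightarrow> real) \<Rightarrow> ibox \<Rightarrow> ibox set" where
  "holder_refine n C g \<rho> \<eta> K =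
     (if \<eta> K = 0 then {K}
      else let m = (\<lambda>i. nat \<lceil>width (K i) * (C * box_vol n K / (\<rho> * \<eta> K)) powr (1 / g)\<rceil>)
           in (\<lambda>t. \<lambda>i. if i < n
                       then Ivl (lower (K i) + real (t i) * width (K i) / real (m i))
                                (lower (K i) + real (t i + 1) * width (K i) / real (m i))
                       else K i) ` (PiE {..<n} (\<lambda>i. {..<m i})))"

primrec adaquad_part :: "(ibox set \<Rightarrow> ibox set) \<Rightarrow> (ibox \<Rightarrow> ibox set) \<Rightarrow> ibox \<Rightarrow> nat \<Rightarrow> ibox set" where
  "adaquad_part mark R \<Omega> 0 = {\<Omega>}"
| "adaquad_part mark R \<Omega> (Suc k) =
     (let P = adaquad_part mark R \<Omega> k; M = mark P in (P - M) \<union> (\<Union>K\<in>M. R K))"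

end

theory Submission
  imports Defs
begin

(* The forward-mode derivatives of the network agree pointwise with the backward Jacobian and
   Hessian recursions evaluated at real points, so running those recursions in interval
   arithmetic encloses every |D^alpha Phi_i|^p, and hence f.  Every operation involved (sums,
   products, |.|^p and the Hoelder enclosures of sigma, sigma', sigma'') maps isotone, Hoelder
   continuous box functions to such functions, hence so is F.

   On each box K of an AdaQuad partition both the integral of f and its quadrature lie in
   [lower F(K), upper F(K)] * vol(K); summing over K bounds their difference by eta_n, and
   t -> t^(1/p) is (1/p)-Hoelder.  A marked box is refined so finely that the indicators of its
   children sum to at most rho * eta_K, and Doerfler marking captures a theta-fraction of eta_n,
   which gives the contraction of eta_n. *)

section \<open>Interval arithmetic\<close>

lemma width_nonneg [simp]: "0 \<le> width (X :: real interval)"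
  by (simp add: width_def)

lemma width_plus_interval: "width (X + Y :: real interval) = width X + width Y"
  by (simp add: width_def)

lemma width_mono_interval: "set_of X \<subseteq> set_of Y \<Longrightarrow> width X \<le> width (Y :: real interval)"
  using lower_le_upper[of X] by (auto simp: set_of_eq width_def)

lemma set_of_subset_iff: "set_of X \<subseteq> set_of Y \<longleftrightarrow> lower Y \<le> lower X \<and> upper X \<le> upper (Y :: real interval)"
  using lower_le_upper[of X] by (auto simp: set_of_eq)

lemma lower_sum_interval: "lower (\<Sum>i\<in>A. X i) = (\<Sum>i\<in>A. lower (X i :: real interval))"
  by (induction A rule: infinite_finite_induct) auto

lemma upper_sum_interval: "upper (\<Sum>i\<in>A. X i) = (\<Sum>i\<in>A. upper (X i :: real interval))"
  by (induction A rule: infinite_finite_induct) auto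

lemma sum_in_intervalI:
  "(\<And>i. i \<in> A \<Longrightarrow> x i \<in> set_of (X i :: real interval)) \<Longrightarrow> (\<Sum>i\<in>A. x i) \<in> set_of (\<Sum>i\<in>A. X i)"
  by (auto simp: set_of_eq lower_sum_interval upper_sum_interval intro!: sum_mono)

lemma interval_of_in_set_of [simp]: "x \<in> set_of (interval_of x)"
  and zero_in_set_of_zero [simp]: "(0::real) \<in> set_of 0"
  and lower_in_set_of [simp]: "lower X \<in> set_of X"
  and upper_in_set_of [simp]: "upper X \<in> set_of X"
  by (auto simp: set_of_eq)

definition mag :: "real interval \<Rightarrow> real" where
  "mag X = max \<bar>lower X\<bar> \<bar>upper X\<bar>"

lemma abs_le_mag: "x \<in> set_of X \<Longrightarrow> \<bar>x\<bar> \<le> mag X"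
  by (auto simp: mag_def set_of_eq)

lemma mag_nonneg: "0 \<le> mag X"
  by (auto simp: mag_def)

lemma mag_mono: "set_of X \<subseteq> set_of Y \<Longrightarrow> mag X \<le> mag Y"
  using abs_le_mag[of "lower X" Y] abs_le_mag[of "upper X" Y] lower_in_set_of[of X] upper_in_set_of[of X]
  unfolding mag_def[of X] by (metis max.boundedI subsetD)

lemma width_times_interval_le: "width (X * Y) \<le> mag X * width Y + mag Y * width X"
proof -
  obtain x1 y1 where 1: "upper (X * Y) = x1 * y1" "x1 \<in> set_of X" "y1 \<in> set_of Y"
    using upper_in_set_of[of "X * Y"] unfolding set_of_times by auto
  obtain x2 y2 where 2: "lower (X * Y) = x2 * y2" "x2 \<in> set_of X" "y2 \<in> set_of Y"
    using lower_in_set_of[of "X * Y"] unfolding set_of_times by auto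
  have "x1 * y1 - x2 * y2 = x1 * (y1 - y2) + y2 * (x1 - x2)"
    by (simp add: algebra_simps)
  also have "\<dots> \<le> \<bar>x1\<bar> * \<bar>y1 - y2\<bar> + \<bar>y2\<bar> * \<bar>x1 - x2\<bar>"
    by (metis abs_ge_self abs_mult add_mono)
  also have "\<dots> \<le> mag X * width Y + mag Y * width X"
    using 1 2 by (intro add_mono mult_mono) (auto simp: mag_nonneg abs_le_mag width_def set_of_eq)
  finally show ?thesis
    using 1 2 by (simp add: width_def)
qed

lemma lower_abs_interval_nonneg: "0 \<le> lower (abs_interval (X :: real interval))"
  using lower_le_upper[of X] by (simp add: min_def)

lemma upper_abs_interval_eq_mag: "upper (abs_interval X) = mag X"
  by (simp add: mag_def)

lemma width_abs_interval_le: "width (abs_interval X) \<le> width (X :: real interval)"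
  using lower_le_upper[of X] by (auto simp del: lower_le_upper simp: width_def abs_if min_def max_def)

lemma abs_in_abs_interval: "x \<in> set_of X \<Longrightarrow> \<bar>x\<bar> \<in> set_of (abs_interval (X :: real interval))"
  by (simp add: set_of_abs_interval)

lemma abs_interval_mono:
  "set_of X \<subseteq> set_of Y \<Longrightarrow> set_of (abs_interval X) \<subseteq> set_of (abs_interval (Y :: real interval))"
  by (auto simp: set_of_abs_interval)

lemma
  assumes "0 \<le> lower X" "0 \<le> p"
  shows lower_ipowr: "lower (ipowr X p) = lower X powr p"
    and upper_ipowr: "upper (ipowr X p) = upper X powr p"
proof -
  have "lower X powr p \<le> upper X powr p"
    using assms by (intro powr_mono2) auto
  then show "lower (ipowr X p) = lower X powr p" "upper (ipowr X p) = upper X powr p"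
    by (simp_all add: ipowr_def lower.rep_eq upper.rep_eq Ivl.rep_eq)
qed

lemma powr_in_ipowr: "x \<in> set_of X \<Longrightarrow> 0 \<le> lower X \<Longrightarrow> 0 \<le> p \<Longrightarrow> x powr p \<in> set_of (ipowr X p)"
  by (auto simp: set_of_eq lower_ipowr upper_ipowr intro: powr_mono2)

lemma ipowr_mono:
  assumes "set_of X \<subseteq> set_of Y" "0 \<le> lower X" "0 \<le> lower Y" "0 \<le> p"
  shows "set_of (ipowr X p) \<subseteq> set_of (ipowr Y p)"
proof -
  have "lower Y \<le> lower X" "upper X \<le> upper Y"
    using assms(1) lower_le_upper[of X] by (auto simp: set_of_eq)
  moreover have "0 \<le> upper X"
    using assms(2) lower_le_upper[of X] by linarith
  ultimately have "lower Y powr p \<le> lower X powr p" "upper X powr p \<le> upper Y powr p"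
    using assms by (auto intro!: powr_mono2)
  then show ?thesis
    using assms by (auto simp: set_of_eq lower_ipowr upper_ipowr)
qed

lemma powr_diff_le_derivative_bound:
  fixes a b p :: real
  assumes "0 \<le> a" "a \<le> b" "1 \<le> p"
  shows "b powr p - a powr p \<le> p * b powr (p - 1) * (b - a)"
proof (cases "a = b")
  case False
  then have ab: "a < b"
    using assms by simp
  have "continuous_on {a..b} (\<lambda>x. x powr p)"
    using assms by (intro continuous_on_powr') (auto intro: continuous_intros)
  moreover have "(\<lambda>x. x powr p) differentiable (at x)" if "a < x" for x
    using has_real_derivative_powr[of x p] that assms real_differentiable_def by fastforce
  ultimately obtain l z where z: "a < z" "z < b" "DERIV (\<lambda>x. x powr p) z :> l"
    and mvt: "b powr p - a powr p = (b - a) * l"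
    using MVT[OF ab] by blast
  have "l = p * z powr (p - 1)"
    using DERIV_unique[OF z(3) has_real_derivative_powr[of z p]] z assms by simp
  also have "\<dots> \<le> p * b powr (p - 1)"
    using z assms by (intro mult_left_mono powr_mono2) auto
  finally show ?thesis
    using mvt ab by (simp add: mult.commute mult_left_mono)
qed simp

lemma width_ipowr_abs_interval_le:
  assumes "1 \<le> p"
  shows "width (ipowr (abs_interval X) p) \<le> p * mag X powr (p - 1) * width X"
proof -
  let ?A = "abs_interval X"
  have "width (ipowr ?A p) = upper ?A powr p - lower ?A powr p"
    using assms lower_abs_interval_nonneg[of X]
    by (simp add: width_def lower_ipowr upper_ipowr del: lower_abs_interval upper_abs_interval)
  also have "\<dots> \<le> p * mag X powr (p - 1) * width ?A"
    using powr_diff_le_derivative_bound[OF lower_abs_interval_nonneg lower_le_upper assms]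
    by (simp add: width_def upper_abs_interval_eq_mag del: lower_abs_interval upper_abs_interval)
  also have "\<dots> \<le> p * mag X powr (p - 1) * width X"
    using assms width_abs_interval_le[of X] by (intro mult_left_mono) auto
  finally show ?thesis .
qed

section \<open>Hoelder continuous interval functions on a box\<close>

lemma box_sub_refl [simp]: "box_sub n K K"
  by (simp add: box_sub_def)

lemma box_sub_trans: "box_sub n A B \<Longrightarrow> box_sub n B C \<Longrightarrow> box_sub n A C"
  unfolding box_sub_def by blast

lemma width_le_box_width: "j < n \<Longrightarrow> width (K j) \<le> box_width n K"
  unfolding box_width_def by (rule Max_ge) auto

lemma box_width_nonneg: "0 < n \<Longrightarrow> 0 \<le> box_width n K"
  using width_le_box_width[of 0 n K] width_nonneg[of "K 0"] by linarith

lemma box_width_mono: "0 < n \<Longrightarrow> box_sub n K K' \<Longrightarrow> box_width n K \<le> box_width n K'"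
  unfolding box_width_def[of n K] box_sub_def
  by (intro Max.boundedI) (auto intro: order_trans[OF width_mono_interval width_le_box_width])

definition isotone_on :: "nat \<Rightarrow> ibox \<Rightarrow> (ibox \<Rightarrow> ivl) \<Rightarrow> bool" where
  "isotone_on n \<Omega> G \<longleftrightarrow> (\<forall>K K'. box_sub n K K' \<and> box_sub n K' \<Omega> \<longrightarrow> set_of (G K) \<subseteq> set_of (G K'))"

definition holder_isotone_on :: "nat \<Rightarrow> ibox \<Rightarrow> (ibox \<Rightarrow> ivl) \<Rightarrow> bool" where
  "holder_isotone_on n \<Omega> G \<longleftrightarrow> isotone_on n \<Omega> G \<and> (\<exists>C e. holder_on n \<Omega> G C e)"

lemma holder_isotone_onE:
  assumes "holder_isotone_on n \<Omega> G"
  obtains C e where "isotone_on n \<Omega> G" "holder_on n \<Omega> G C e"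
  using assms unfolding holder_isotone_on_def by blast

lemma isotone_on_subset_domain: "isotone_on n \<Omega> G \<Longrightarrow> box_sub n K \<Omega> \<Longrightarrow> set_of (G K) \<subseteq> set_of (G \<Omega>)"
  unfolding isotone_on_def by auto

lemma powr_le_powr_split:
  fixes w B e e' :: real
  assumes "0 \<le> w" "w \<le> B" "0 < e'" "e' \<le> e"
  shows "w powr e \<le> B powr (e - e') * w powr e'"
proof -
  have "w powr e = w powr (e - e') * w powr e'"
    using assms by (cases "w = 0") (simp_all add: powr_add[symmetric])
  also have "\<dots> \<le> B powr (e - e') * w powr e'"
    using assms by (intro mult_right_mono powr_mono2) auto
  finally show ?thesis .
qed

lemma holder_on_smaller_exponent:
  assumes "0 < n" "holder_on n \<Omega> G C e" "0 < e'" "e' \<le> e"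
  shows "holder_on n \<Omega> G (C * box_width n \<Omega> powr (e - e')) e'"
  unfolding holder_on_def
proof (intro conjI allI impI)
  fix K assume K: "box_sub n K \<Omega>"
  have "width (G K) \<le> C * box_width n K powr e"
    using assms(2) K by (simp add: holder_on_def)
  also have "\<dots> \<le> C * (box_width n \<Omega> powr (e - e') * box_width n K powr e')"
    using assms box_width_nonneg box_width_mono[OF assms(1) K]
    by (intro mult_left_mono powr_le_powr_split) (auto simp: holder_on_def)
  finally show "width (G K) \<le> C * box_width n \<Omega> powr (e - e') * box_width n K powr e'"
    by (simp add: mult.assoc)
qed (use assms in \<open>auto simp: holder_on_def\<close>)

lemma holder_on_common_exponent:
  assumes "0 < n" "holder_on n \<Omega> G C1 e1" "holder_on n \<Omega> H C2 e2"
  obtains C1' C2' e where "holder_on n \<Omega> G C1' e" "holder_on n \<Omega> H C2' e"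
proof -
  have "0 < min e1 e2" "min e1 e2 \<le> e1" "min e1 e2 \<le> e2"
    using assms(2,3) by (auto simp: holder_on_def)
  then show ?thesis
    using that holder_on_smaller_exponent[OF assms(1,2)] holder_on_smaller_exponent[OF assms(1,3)]
    by blast
qed

lemma holder_isotone_const: "holder_isotone_on n \<Omega> (\<lambda>K. interval_of c)"
  and holder_isotone_zero: "holder_isotone_on n \<Omega> (\<lambda>K. 0)"
  unfolding holder_isotone_on_def isotone_on_def holder_on_def
  by (auto simp: width_def intro!: exI[of _ 0] exI[of _ 1])

lemma holder_isotone_coordinate: "j < n \<Longrightarrow> holder_isotone_on n \<Omega> (\<lambda>K. K j)"
  unfolding holder_isotone_on_def isotone_on_def holder_on_def
  by (auto intro!: exI[of _ 1] order_trans[OF width_le_box_width abs_ge_self] simp: box_sub_def)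

lemma holder_isotone_add:
  assumes "0 < n" "holder_isotone_on n \<Omega> G" "holder_isotone_on n \<Omega> H"
  shows "holder_isotone_on n \<Omega> (\<lambda>K. G K + H K)"
proof -
  obtain C1 C2 e where G: "isotone_on n \<Omega> G" "holder_on n \<Omega> G C1 e"
    and H: "isotone_on n \<Omega> H" "holder_on n \<Omega> H C2 e"
    using assms by (metis holder_isotone_onE holder_on_common_exponent)
  have "holder_on n \<Omega> (\<lambda>K. G K + H K) (C1 + C2) e"
    using G(2) H(2) by (auto simp: holder_on_def width_plus_interval distrib_right intro: add_mono)
  moreover have "isotone_on n \<Omega> (\<lambda>K. G K + H K)"
    using G(1) H(1) unfolding isotone_on_def by (meson set_of_add_inc)
  ultimately show ?thesis
    unfolding holder_isotone_on_def by blast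
qed

lemma holder_isotone_mult:
  assumes "0 < n" "holder_isotone_on n \<Omega> G" "holder_isotone_on n \<Omega> H"
  shows "holder_isotone_on n \<Omega> (\<lambda>K. G K * H K)"
proof -
  obtain C1 C2 e where G: "isotone_on n \<Omega> G" "holder_on n \<Omega> G C1 e"
    and H: "isotone_on n \<Omega> H" "holder_on n \<Omega> H C2 e"
    using assms by (metis holder_isotone_onE holder_on_common_exponent)
  have "width (G K * H K) \<le> (mag (G \<Omega>) * C2 + mag (H \<Omega>) * C1) * box_width n K powr e"
    if K: "box_sub n K \<Omega>" for K
  proof -
    have "width (G K * H K) \<le> mag (G K) * width (H K) + mag (H K) * width (G K)"
      by (rule width_times_interval_le)
    also have "\<dots> \<le> mag (G \<Omega>) * (C2 * box_width n K powr e) + mag (H \<Omega>) * (C1 * box_width n K powr e)"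
      using G H K
      by (intro add_mono mult_mono mag_mono isotone_on_subset_domain)
        (auto simp: holder_on_def mag_nonneg)
    finally show ?thesis
      by (simp add: algebra_simps)
  qed
  then have "holder_on n \<Omega> (\<lambda>K. G K * H K) (mag (G \<Omega>) * C2 + mag (H \<Omega>) * C1) e"
    using G(2) H(2) by (auto simp: holder_on_def mag_nonneg)
  moreover have "isotone_on n \<Omega> (\<lambda>K. G K * H K)"
    using G(1) H(1) unfolding isotone_on_def by (meson set_of_mul_inc)
  ultimately show ?thesis
    unfolding holder_isotone_on_def by blast
qed

lemma holder_isotone_sum:
  assumes "0 < n" "\<And>i. i \<in> A \<Longrightarrow> holder_isotone_on n \<Omega> (G i)"
  shows "holder_isotone_on n \<Omega> (\<lambda>K. \<Sum>i\<in>A. G i K)"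
  using assms(2)
proof (induction A rule: infinite_finite_induct)
  case (insert x A)
  then show ?case
    using holder_isotone_add[OF assms(1), where G="G x" and H="\<lambda>K. \<Sum>i\<in>A. G i K"] by simp
qed (simp_all add: holder_isotone_zero)

lemma ienclosure_R_mem: "ienclosure_R T t \<Longrightarrow> x \<in> set_of X \<Longrightarrow> t x \<in> set_of (T X)"
  unfolding ienclosure_R_def by blast

lemma continuous_on_if_holder_enclosure:
  assumes "ienclosure_R S f" "holder_R S"
  shows "continuous_on UNIV f"
proof -
  obtain C e where C: "0 \<le> C" "0 < e" "\<And>X. width (S X) \<le> C * width X powr e"
    using assms(2) unfolding holder_R_def by blast
  have bound: "\<bar>f y - f x\<bar> \<le> C * \<bar>y - x\<bar> powr e" for x y
  proof -
    define X where "X = Ivl (min x y) (max x y)"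
    have X: "lower X = min x y" "upper X = max x y"
      by (simp_all add: X_def lower.rep_eq upper.rep_eq Ivl.rep_eq)
    then have "x \<in> set_of X" "y \<in> set_of X"
      by (auto simp: set_of_eq)
    then have "f x \<in> set_of (S X)" "f y \<in> set_of (S X)"
      by (auto intro: ienclosure_R_mem[OF assms(1)])
    then have "\<bar>f y - f x\<bar> \<le> width (S X)"
      by (auto simp: set_of_eq width_def)
    also have "\<dots> \<le> C * width X powr e"
      by (rule C(3))
    also have "width X = \<bar>y - x\<bar>"
      using X by (auto simp: width_def)
    finally show ?thesis .
  qed
  have "isCont f x" for x
  proof -
    have "((\<lambda>y. C * \<bar>y - x\<bar> powr e) \<longlongrightarrow> C * \<bar>x - x\<bar> powr e) (at x)"
      using C(2) by (intro tendsto_intros tendsto_powr') auto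
    then have "((\<lambda>y. C * \<bar>y - x\<bar> powr e) \<longlongrightarrow> 0) (at x)"
      using C(2) by simp
    moreover have "\<forall>\<^sub>F y in at x. norm (f y - f x) \<le> C * \<bar>y - x\<bar> powr e"
      using bound by (intro always_eventually allI) simp
    ultimately have "((\<lambda>y. f y - f x) \<longlongrightarrow> 0) (at x)"
      by (metis Lim_null_comparison)
    then show ?thesis
      unfolding isCont_def by (rule LIM_zero_cancel)
  qed
  then show ?thesis
    by (intro continuous_at_imp_continuous_on) auto
qed

lemma holder_isotone_compose:
  assumes "ienclosure_R S s" "holder_R S" "holder_isotone_on n \<Omega> G"
  shows "holder_isotone_on n \<Omega> (\<lambda>K. S (G K))"
proof -
  obtain C e where G: "isotone_on n \<Omega> G" "holder_on n \<Omega> G C e"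
    using assms(3) by (rule holder_isotone_onE)
  obtain Cs es where S: "0 \<le> Cs" "0 < es" "\<And>X. width (S X) \<le> Cs * width X powr es"
    using assms(2) unfolding holder_R_def by blast
  have "width (S (G K)) \<le> (Cs * C powr es) * box_width n K powr (e * es)"
    if K: "box_sub n K \<Omega>" for K
  proof -
    have "width (S (G K)) \<le> Cs * width (G K) powr es"
      by (rule S(3))
    also have "\<dots> \<le> Cs * (C * box_width n K powr e) powr es"
      using G(2) K S by (intro mult_left_mono powr_mono2) (auto simp: holder_on_def)
    also have "\<dots> = (Cs * C powr es) * box_width n K powr (e * es)"
      using G(2) by (simp add: holder_on_def powr_mult powr_powr)
    finally show ?thesis .
  qed
  then have "holder_on n \<Omega> (\<lambda>K. S (G K)) (Cs * C powr es) (e * es)"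
    using G(2) S by (auto simp: holder_on_def)
  moreover have "isotone_on n \<Omega> (\<lambda>K. S (G K))"
    using assms(1) G(1) unfolding ienclosure_R_def isotone_on_def by blast
  ultimately show ?thesis
    unfolding holder_isotone_on_def by blast
qed

lemma holder_isotone_ipowr_abs:
  assumes "1 \<le> p" "holder_isotone_on n \<Omega> G"
  shows "holder_isotone_on n \<Omega> (\<lambda>K. ipowr (abs_interval (G K)) p)"
proof -
  obtain C e where G: "isotone_on n \<Omega> G" "holder_on n \<Omega> G C e"
    using assms(2) by (rule holder_isotone_onE)
  define M where "M = p * mag (G \<Omega>) powr (p - 1)"
  have "width (ipowr (abs_interval (G K)) p) \<le> (M * C) * box_width n K powr e"
    if K: "box_sub n K \<Omega>" for K
  proof -
    have "width (ipowr (abs_interval (G K)) p) \<le> p * mag (G K) powr (p - 1) * width (G K)"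
      by (rule width_ipowr_abs_interval_le[OF assms(1)])
    also have "\<dots> \<le> M * (C * box_width n K powr e)"
      unfolding M_def using G K assms(1)
      by (intro mult_mono powr_mono2 mult_left_mono mag_mono isotone_on_subset_domain)
        (auto simp: holder_on_def mag_nonneg)
    finally show ?thesis
      by (simp add: mult.assoc)
  qed
  then have "holder_on n \<Omega> (\<lambda>K. ipowr (abs_interval (G K)) p) (M * C) e"
    using G(2) assms(1) by (auto simp: holder_on_def M_def)
  moreover have "isotone_on n \<Omega> (\<lambda>K. ipowr (abs_interval (G K)) p)"
    using G(1) assms(1) unfolding isotone_on_def
    by (intro allI impI ipowr_mono abs_interval_mono lower_abs_interval_nonneg) auto
  ultimately show ?thesis
    unfolding holder_isotone_on_def by blast
qed

section \<open>Derivatives of a network by backward recursion\<close>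

lemma sum4_swap:
  "(\<Sum>p\<in>P. \<Sum>q\<in>Q. \<Sum>c\<in>C. \<Sum>a\<in>A. f p q c a) = (\<Sum>a\<in>A. \<Sum>c\<in>C. \<Sum>p\<in>P. \<Sum>q\<in>Q. f p q c a)"
proof -
  have "(\<Sum>p\<in>P. \<Sum>q\<in>Q. \<Sum>c\<in>C. \<Sum>a\<in>A. f p q c a) = (\<Sum>p\<in>P. \<Sum>c\<in>C. \<Sum>q\<in>Q. \<Sum>a\<in>A. f p q c a)"
    by (intro sum.cong refl sum.swap)
  also have "\<dots> = (\<Sum>p\<in>P. \<Sum>c\<in>C. \<Sum>a\<in>A. \<Sum>q\<in>Q. f p q c a)"
    by (intro sum.cong refl sum.swap)
  also have "\<dots> = (\<Sum>c\<in>C. \<Sum>p\<in>P. \<Sum>a\<in>A. \<Sum>q\<in>Q. f p q c a)"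
    by (rule sum.swap)
  also have "\<dots> = (\<Sum>c\<in>C. \<Sum>a\<in>A. \<Sum>p\<in>P. \<Sum>q\<in>Q. f p q c a)"
    by (intro sum.cong refl sum.swap)
  also have "\<dots> = (\<Sum>a\<in>A. \<Sum>c\<in>C. \<Sum>p\<in>P. \<Sum>q\<in>Q. f p q c a)"
    by (rule sum.swap)
  finally show ?thesis .
qed

locale network =
  fixes s s1 s2 :: "real \<Rightarrow> real" and d :: "nat \<Rightarrow> nat"
    and W :: "nat \<Rightarrow> nat \<Rightarrow> nat \<Rightarrow> real" and b :: "nat \<Rightarrow> nat \<Rightarrow> real" and L :: nat
begin

lemma nn_x_Suc_eq_nn_z: "nn_x s d W b (Suc k) u a = s (nn_z s d W b k u a)"
  by (simp add: nn_z_def)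

text \<open>Forward-mode derivatives: when \<open>s1 = s'\<close> and \<open>s2 = s''\<close>, \<open>dx j k u a\<close> and
  \<open>ddx j l k u a\<close> are the partial derivatives of \<open>nn_x s d W b k u a\<close> with respect to \<open>u j\<close>
  and to \<open>u j, u l\<close>; \<open>dz\<close> and \<open>ddz\<close> are those of \<open>nn_z s d W b k u a\<close>.\<close>

primrec dx :: "nat \<Rightarrow> nat \<Rightarrow> (nat \<Rightarrow> real) \<Rightarrow> nat \<Rightarrow> real" where
  "dx j 0 u a = of_bool (a = j)"
| "dx j (Suc k) u a = s1 (nn_z s d W b k u a) * (\<Sum>c<d k. W k a c * dx j k u c)"

definition dz :: "nat \<Rightarrow> nat \<Rightarrow> (nat \<Rightarrow> real) \<Rightarrow> nat \<Rightarrow> real" where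
  "dz j k u a = (\<Sum>c<d k. W k a c * dx j k u c)"

primrec ddx :: "nat \<Rightarrow> nat \<Rightarrow> nat \<Rightarrow> (nat \<Rightarrow> real) \<Rightarrow> nat \<Rightarrow> real" where
  "ddx j l 0 u a = 0"
| "ddx j l (Suc k) u a = s2 (nn_z s d W b k u a) * dz j k u a * dz l k u a
      + s1 (nn_z s d W b k u a) * (\<Sum>c<d k. W k a c * ddx j l k u c)"

definition ddz :: "nat \<Rightarrow> nat \<Rightarrow> nat \<Rightarrow> (nat \<Rightarrow> real) \<Rightarrow> nat \<Rightarrow> real" where
  "ddz j l k u a = (\<Sum>c<d k. W k a c * ddx j l k u c)"

lemma dx_Suc_eq: "dx j (Suc k) u a = s1 (nn_z s d W b k u a) * dz j k u a"
  by (simp add: dz_def)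

lemma ddx_Suc_eq:
  "ddx j l (Suc k) u a = s2 (nn_z s d W b k u a) * dz j k u a * dz l k u a
      + s1 (nn_z s d W b k u a) * ddz j l k u a"
  by (simp add: ddz_def)

text \<open>Point versions of \<^const>\<open>jac_steps\<close> and \<^const>\<open>hess_steps\<close>, with the same
  bracketing, so that interval inclusion can be checked operation by operation.\<close>

primrec jac_bwd :: "nat \<Rightarrow> (nat \<Rightarrow> real) \<Rightarrow> nat \<Rightarrow> nat \<Rightarrow> real" where
  "jac_bwd 0 u = (\<lambda>i a. W L i a)"
| "jac_bwd (Suc m) u = (\<lambda>i c. \<Sum>a<d (L - Suc m + 1).
      (jac_bwd m u i a * s1 (nn_z s d W b (L - Suc m) u a)) * W (L - Suc m) a c)"

primrec hess_bwd :: "nat \<Rightarrow> nat \<Rightarrow> (nat \<Rightarrow> real) \<Rightarrow> nat \<Rightarrow> nat \<Rightarrow> real" where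
  "hess_bwd i 0 u = (\<lambda>_ _. 0)"
| "hess_bwd i (Suc m) u = (\<lambda>p q.
      (\<Sum>c<d (L - Suc m + 1). ((\<Sum>a<d (L - Suc m + 1).
          (W (L - Suc m) a p * s1 (nn_z s d W b (L - Suc m) u a)) * hess_bwd i m u a c)
          * s1 (nn_z s d W b (L - Suc m) u c)) * W (L - Suc m) c q)
    + (\<Sum>a<d (L - Suc m + 1). (W (L - Suc m) a p *
          (s2 (nn_z s d W b (L - Suc m) u a) * jac_bwd m u i a)) * W (L - Suc m) a q))"

lemma jac_bwd_Suc_sum:
  assumes "L - m = Suc k"
  shows "(\<Sum>c<d k. jac_bwd (Suc m) u i c * v c) =
    (\<Sum>a<d (Suc k). jac_bwd m u i a * s1 (nn_z s d W b k u a) * (\<Sum>c<d k. W k a c * v c))"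
proof -
  have k: "L - Suc m = k" "L - Suc m + 1 = Suc k"
    using assms by simp_all
  have "(\<Sum>c<d k. jac_bwd (Suc m) u i c * v c) =
      (\<Sum>c<d k. \<Sum>a<d (Suc k). jac_bwd m u i a * s1 (nn_z s d W b k u a) * W k a c * v c)"
    by (simp add: k sum_distrib_right)
  also have "\<dots> = (\<Sum>a<d (Suc k). \<Sum>c<d k. jac_bwd m u i a * s1 (nn_z s d W b k u a) * W k a c * v c)"
    by (rule sum.swap)
  also have "\<dots> = (\<Sum>a<d (Suc k). jac_bwd m u i a * s1 (nn_z s d W b k u a) * (\<Sum>c<d k. W k a c * v c))"
    by (simp add: sum_distrib_left mult.assoc)
  finally show ?thesis .
qed

lemma hess_bwd_Suc_sum:
  fixes x y u :: "nat \<Rightarrow> real"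
  assumes "L - m = Suc k"
  defines "Wx a \<equiv> \<Sum>p<d k. W k a p * x p" and "Wy a \<equiv> \<Sum>q<d k. W k a q * y q"
    and "\<sigma>1 a \<equiv> s1 (nn_z s d W b k u a)" and "\<sigma>2 a \<equiv> s2 (nn_z s d W b k u a)"
  shows "(\<Sum>p<d k. \<Sum>q<d k. x p * hess_bwd i (Suc m) u p q * y q) =
    (\<Sum>a<d (Suc k). \<Sum>c<d (Suc k). (\<sigma>1 a * Wx a) * hess_bwd i m u a c * (\<sigma>1 c * Wy c))
    + (\<Sum>a<d (Suc k). jac_bwd m u i a * (\<sigma>2 a * Wx a * Wy a))"
proof -
  have k: "L - Suc m = k" "L - Suc m + 1 = Suc k"
    using assms(1) by simp_all
  let ?H = "hess_bwd i m u" and ?J = "jac_bwd m u i" and ?n = "d (Suc k)"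
  have "(\<Sum>p<d k. \<Sum>q<d k. x p * (\<Sum>c<?n. (\<Sum>a<?n. W k a p * \<sigma>1 a * ?H a c) * \<sigma>1 c * W k c q) * y q)
     = (\<Sum>p<d k. \<Sum>q<d k. \<Sum>c<?n. \<Sum>a<?n. x p * (W k a p * \<sigma>1 a * ?H a c * \<sigma>1 c * W k c q) * y q)"
    by (simp add: sum_distrib_left sum_distrib_right)
  also have "\<dots> = (\<Sum>a<?n. \<Sum>c<?n. \<Sum>p<d k. \<Sum>q<d k. x p * (W k a p * \<sigma>1 a * ?H a c * \<sigma>1 c * W k c q) * y q)"
    by (rule sum4_swap)
  also have "\<dots> = (\<Sum>a<?n. \<Sum>c<?n. (\<sigma>1 a * Wx a) * ?H a c * (\<sigma>1 c * Wy c))"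
    by (simp add: Wx_def Wy_def sum_distrib_left sum_distrib_right mult.commute mult.left_commute mult.assoc)
  finally have first: "(\<Sum>p<d k. \<Sum>q<d k. x p * (\<Sum>c<?n. (\<Sum>a<?n. W k a p * \<sigma>1 a * ?H a c) * \<sigma>1 c * W k c q) * y q)
     = (\<Sum>a<?n. \<Sum>c<?n. (\<sigma>1 a * Wx a) * ?H a c * (\<sigma>1 c * Wy c))" .
  have "(\<Sum>p<d k. \<Sum>q<d k. x p * (\<Sum>a<?n. W k a p * (\<sigma>2 a * ?J a) * W k a q) * y q)
     = (\<Sum>p<d k. \<Sum>a<?n. \<Sum>q<d k. x p * (W k a p * (\<sigma>2 a * ?J a) * W k a q) * y q)"
    by (simp add: sum_distrib_left sum_distrib_right) (intro sum.cong refl sum.swap)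
  also have "\<dots> = (\<Sum>a<?n. \<Sum>p<d k. \<Sum>q<d k. x p * (W k a p * (\<sigma>2 a * ?J a) * W k a q) * y q)"
    by (rule sum.swap)
  also have "\<dots> = (\<Sum>a<?n. ?J a * (\<sigma>2 a * Wx a * Wy a))"
    by (simp add: Wx_def Wy_def sum_distrib_left sum_distrib_right mult.commute mult.left_commute mult.assoc)
  finally have second: "(\<Sum>p<d k. \<Sum>q<d k. x p * (\<Sum>a<?n. W k a p * (\<sigma>2 a * ?J a) * W k a q) * y q)
     = (\<Sum>a<?n. ?J a * (\<sigma>2 a * Wx a * Wy a))" .
  have "hess_bwd i (Suc m) u p q = (\<Sum>c<?n. (\<Sum>a<?n. W k a p * \<sigma>1 a * ?H a c) * \<sigma>1 c * W k c q)
      + (\<Sum>a<?n. W k a p * (\<sigma>2 a * ?J a) * W k a q)" for p q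
    by (simp add: k \<sigma>1_def \<sigma>2_def)
  then show ?thesis
    unfolding first[symmetric] second[symmetric]
    by (simp add: distrib_left distrib_right sum.distrib)
qed

lemma dz_eq_jac_bwd_sum: "m \<le> L \<Longrightarrow> dz j L u i = (\<Sum>a<d (L - m). jac_bwd m u i a * dx j (L - m) u a)"
proof (induction m)
  case 0
  then show ?case
    by (simp add: dz_def)
next
  case (Suc m)
  define k where "k = L - Suc m"
  have k: "L - m = Suc k"
    using Suc.prems by (simp add: k_def)
  have "dz j L u i = (\<Sum>a<d (Suc k). jac_bwd m u i a * dx j (Suc k) u a)"
    using Suc by (simp add: k)
  also have "\<dots> = (\<Sum>c<d k. jac_bwd (Suc m) u i c * dx j k u c)"
    by (subst jac_bwd_Suc_sum[OF k]) (simp add: mult.assoc)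
  finally show ?case
    by (simp add: k_def)
qed

lemma dz_eq_jac_bwd: "j < d 0 \<Longrightarrow> dz j L u i = jac_bwd L u i j"
  using dz_eq_jac_bwd_sum[of L j u i] by simp

lemma ddz_eq_hess_bwd_sum:
  "m \<le> L \<Longrightarrow> ddz j l L u i =
     (\<Sum>a<d (L - m). \<Sum>c<d (L - m). dx j (L - m) u a * hess_bwd i m u a c * dx l (L - m) u c)
   + (\<Sum>a<d (L - m). jac_bwd m u i a * ddx j l (L - m) u a)"
proof (induction m)
  case 0
  then show ?case
    by (simp add: ddz_def)
next
  case (Suc m)
  define k where "k = L - Suc m"
  have k: "L - m = Suc k"
    using Suc.prems by (simp add: k_def)
  have "ddz j l L u i =
     (\<Sum>a<d (Suc k). \<Sum>c<d (Suc k). dx j (Suc k) u a * hess_bwd i m u a c * dx l (Suc k) u c)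
   + (\<Sum>a<d (Suc k). jac_bwd m u i a * ddx j l (Suc k) u a)"
    using Suc by (simp add: k)
  also have "\<dots> =
     (\<Sum>p<d k. \<Sum>q<d k. dx j k u p * hess_bwd i (Suc m) u p q * dx l k u q)
   + (\<Sum>p<d k. jac_bwd (Suc m) u i p * ddx j l k u p)"
    unfolding hess_bwd_Suc_sum[OF k] jac_bwd_Suc_sum[OF k] dx_Suc_eq ddx_Suc_eq
      dz_def[symmetric] ddz_def[symmetric]
    by (simp add: distrib_left sum.distrib mult.assoc)
  finally show ?case
    by (simp add: k_def)
qed

lemma ddz_eq_hess_bwd:
  assumes "j < d 0" "l < d 0"
  shows "ddz j l L u i = hess_bwd i L u j l"
proof -
  have "(\<Sum>c<d 0. of_bool (a = j) * hess_bwd i L u a c * of_bool (c = l)) = of_bool (a = j) * hess_bwd i L u a l"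
    for a
  proof -
    have "{..<d 0} \<inter> {c. c = l} = {l}"
      using assms(2) by auto
    then show ?thesis
      unfolding sum_mult_of_bool_eq by simp
  qed
  then show ?thesis
    using ddz_eq_hess_bwd_sum[of L j l u i] assms(1) by simp
qed

end

context network
begin

lemma has_real_derivative_nn_z_if_nn_x:
  assumes "\<And>c. ((\<lambda>t. nn_x s d W b k (u(j := t)) c) has_real_derivative dx j k (u(j := t0)) c) (at t0)"
  shows "((\<lambda>t. nn_z s d W b k (u(j := t)) a) has_real_derivative dz j k (u(j := t0)) a) (at t0)"
  using DERIV_add[OF DERIV_sum[OF DERIV_cmult[OF assms]] DERIV_const]
  by (simp add: nn_z_def dz_def)

lemma has_real_derivative_dz_if_dx:
  assumes "\<And>c. ((\<lambda>t. dx j k (u(l := t)) c) has_real_derivative ddx j l k (u(l := t0)) c) (at t0)"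
  shows "((\<lambda>t. dz j k (u(l := t)) a) has_real_derivative ddz j l k (u(l := t0)) a) (at t0)"
  using DERIV_sum[OF DERIV_cmult[OF assms]] by (simp add: dz_def ddz_def)

end

locale twice_differentiable_network = network +
  assumes deriv_s: "\<And>x. (s has_real_derivative s1 x) (at x)"
    and deriv_s1: "\<And>x. (s1 has_real_derivative s2 x) (at x)"
begin

lemma has_real_derivative_nn_x:
  "((\<lambda>t. nn_x s d W b k (u(j := t)) a) has_real_derivative dx j k (u(j := t0)) a) (at t0)"
proof (induction k arbitrary: a)
  case 0
  then show ?case
    by (cases "a = j") simp_all
next
  case (Suc k)
  show ?case
    unfolding nn_x_Suc_eq_nn_z dx_Suc_eq
    using DERIV_chain'[OF has_real_derivative_nn_z_if_nn_x[OF Suc.IH] deriv_s]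
    by (simp add: mult.commute)
qed

lemma has_real_derivative_nn_z:
  "((\<lambda>t. nn_z s d W b k (u(j := t)) a) has_real_derivative dz j k (u(j := t0)) a) (at t0)"
  by (rule has_real_derivative_nn_z_if_nn_x[OF has_real_derivative_nn_x])

lemma has_real_derivative_dx:
  "((\<lambda>t. dx j k (u(l := t)) a) has_real_derivative ddx j l k (u(l := t0)) a) (at t0)"
proof (induction k arbitrary: a)
  case (Suc k)
  have "((\<lambda>t. s1 (nn_z s d W b k (u(l := t)) a)) has_real_derivative
      s2 (nn_z s d W b k (u(l := t0)) a) * dz l k (u(l := t0)) a) (at t0)"
    using DERIV_chain'[OF has_real_derivative_nn_z deriv_s1] by (simp add: mult.commute)
  from DERIV_mult[OF this has_real_derivative_dz_if_dx[OF Suc.IH]]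
  show ?case
    unfolding dx_Suc_eq ddx_Suc_eq by (rule DERIV_cong) (simp add: algebra_simps)
qed simp

lemma has_real_derivative_dz:
  "((\<lambda>t. dz j k (u(l := t)) a) has_real_derivative ddz j l k (u(l := t0)) a) (at t0)"
  by (rule has_real_derivative_dz_if_dx[OF has_real_derivative_dx])

lemma partial_nn_z: "partial j (\<lambda>u. nn_z s d W b k u a) = (\<lambda>u. dz j k u a)"
  unfolding partial_def using DERIV_imp_deriv[OF has_real_derivative_nn_z] by simp

lemma partial_dz: "partial l (\<lambda>u. dz j k u a) = (\<lambda>u. ddz j l k u a)"
  unfolding partial_def using DERIV_imp_deriv[OF has_real_derivative_dz] by simp

lemma continuous_s: "continuous_on UNIV s"
  and continuous_s1: "continuous_on UNIV s1"
  using deriv_s deriv_s1 by (auto intro!: continuous_at_imp_continuous_on DERIV_isCont)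

lemma continuous_nn_z: "continuous_on UNIV (\<lambda>x. nn_z s d W b k x a)"
proof (induction k arbitrary: a)
  case (Suc k)
  have "continuous_on UNIV (\<lambda>x. nn_x s d W b (Suc k) x c)" for c
    unfolding nn_x_Suc_eq_nn_z by (rule continuous_on_compose2[OF continuous_s Suc.IH subset_UNIV])
  then show ?case
    unfolding nn_z_def by (intro continuous_intros)
qed (simp add: nn_z_def continuous_intros)

lemma continuous_dz: "continuous_on UNIV (\<lambda>x. dz j k x a)"
proof (induction k arbitrary: a)
  case (Suc k)
  have "continuous_on UNIV (\<lambda>x. dx j (Suc k) x c)" for c
    unfolding dx_Suc_eq
    by (intro continuous_intros continuous_on_compose2[OF continuous_s1 continuous_nn_z subset_UNIV] Suc.IH)
  then show ?case
    unfolding dz_def by (intro continuous_intros)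
qed (simp add: dz_def continuous_intros)

lemma continuous_ddz:
  assumes "continuous_on UNIV s2"
  shows "continuous_on UNIV (\<lambda>x. ddz j l k x a)"
proof (induction k arbitrary: a)
  case (Suc k)
  have "continuous_on UNIV (\<lambda>x. ddx j l (Suc k) x c)" for c
    unfolding ddx_Suc_eq
    by (intro continuous_intros continuous_on_compose2[OF assms continuous_nn_z subset_UNIV]
        continuous_on_compose2[OF continuous_s1 continuous_nn_z subset_UNIV] continuous_dz Suc.IH)
  then show ?case
    unfolding ddz_def by (intro continuous_intros)
qed (simp add: ddz_def)

end

section \<open>Interval evaluation of a network\<close>

lemma imat_mult_idiag: "a < n \<Longrightarrow> imat_mult n A (idiag v) i a = A i a * v a"
  unfolding imat_mult_def idiag_def by (simp add: if_distrib cong: if_cong)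

lemma jac_steps_Suc_apply:
  assumes "k = L - Suc m"
  shows "jac_steps S S1 d W b L (Suc m) K i c =
    (\<Sum>a<d (k + 1). (jac_steps S S1 d W b L m K i a * S1 (Fval S d W b (k + 1) K a)) * interval_of (W k a c))"
proof -
  let ?D = "idiag (\<lambda>a. S1 (Fval S d W b (k + 1) K a))" and ?J = "jac_steps S S1 d W b L m K"
  have "jac_steps S S1 d W b L (Suc m) K i c = (\<Sum>a<d (k + 1). imat_mult (d (k + 1)) ?J ?D i a * interval_of (W k a c))"
    using assms by (simp add: Let_def imat_mult_def[of _ "imat_mult _ _ _"] ireal_mat_def)
  then show ?thesis
    by (simp add: imat_mult_idiag)
qed

lemma hess_steps_Suc_apply:
  assumes "k = L - Suc m"
  shows "hess_steps S S1 S2 d W b L i (Suc m) K p q =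
    (\<Sum>c<d (k + 1). ((\<Sum>a<d (k + 1). (interval_of (W k a p) * S1 (Fval S d W b (k + 1) K a))
        * hess_steps S S1 S2 d W b L i m K a c) * S1 (Fval S d W b (k + 1) K c)) * interval_of (W k c q))
  + (\<Sum>a<d (k + 1). (interval_of (W k a p) * (S2 (Fval S d W b (k + 1) K a)
        * Jac S S1 d W b L (k + 1) K i a)) * interval_of (W k a q))"
proof -
  define n where "n = d (k + 1)"
  define v where "v = (\<lambda>a. S1 (Fval S d W b (k + 1) K a))"
  define w where "w = (\<lambda>a. S2 (Fval S d W b (k + 1) K a) * Jac S S1 d W b L (k + 1) K i a)"
  define H where "H = hess_steps S S1 S2 d W b L i m K"
  define Wm where "Wm = ireal_mat (W k)"
  define Wt where "Wt = itrans Wm"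
  have "hess_steps S S1 S2 d W b L i (Suc m) K p q =
    imat_add (imat_mult n (imat_mult n (imat_mult n (imat_mult n Wt (idiag v)) H) (idiag v)) Wm)
      (imat_mult n (imat_mult n Wt (idiag w)) Wm) p q"
    by (simp add: assms Let_def n_def v_def w_def H_def Wm_def Wt_def)
  also have "\<dots> = (\<Sum>c<n. imat_mult n (imat_mult n (imat_mult n Wt (idiag v)) H) (idiag v) p c * Wm c q)
     + (\<Sum>a<n. imat_mult n Wt (idiag w) p a * Wm a q)"
    by (simp add: imat_add_def imat_mult_def[of n "imat_mult n (imat_mult n (imat_mult n Wt (idiag v)) H) (idiag v)"]
        imat_mult_def[of n "imat_mult n Wt (idiag w)"])
  also have "\<dots> = (\<Sum>c<n. ((\<Sum>a<n. (Wt p a * v a) * H a c) * v c) * Wm c q)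
     + (\<Sum>a<n. (Wt p a * w a) * Wm a q)"
    by (simp add: imat_mult_idiag imat_mult_def[of n "imat_mult n Wt (idiag v)" H])
  finally show ?thesis
    by (simp add: n_def v_def w_def H_def Wm_def Wt_def itrans_def ireal_mat_def)
qed

locale interval_network = network +
  fixes S S1 S2 :: "real interval \<Rightarrow> real interval"
  assumes encl_S: "ienclosure_R S s" and encl_S1: "ienclosure_R S1 s1" and encl_S2: "ienclosure_R S2 s2"
begin

lemma nn_x_in_fval_x:
  "x \<in> box_pts (d 0) K \<Longrightarrow> a < d k \<Longrightarrow> nn_x s d W b k x a \<in> set_of (fval_x S d W b k K a)"
proof (induction k arbitrary: a)
  case 0
  then show ?case
    by (simp add: box_pts_def)
next
  case (Suc k)
  then show ?case
    by (auto intro!: ienclosure_R_mem[OF encl_S] plus_in_intervalI sum_in_intervalI times_in_intervalI)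
qed

lemma nn_z_in_Fval: "x \<in> box_pts (d 0) K \<Longrightarrow> nn_z s d W b k x a \<in> set_of (Fval S d W b (Suc k) K a)"
  unfolding nn_z_def Fval_def
  by (auto intro!: plus_in_intervalI sum_in_intervalI times_in_intervalI nn_x_in_fval_x)

lemma jac_bwd_in_jac_steps:
  "x \<in> box_pts (d 0) K \<Longrightarrow> m \<le> L \<Longrightarrow> jac_bwd m x i a \<in> set_of (jac_steps S S1 d W b L m K i a)"
proof (induction m arbitrary: i a)
  case 0
  then show ?case
    by (simp add: ireal_mat_def)
next
  case (Suc m)
  have k: "L - Suc m + 1 = Suc (L - Suc m)"
    by simp
  show ?case
    unfolding jac_steps_Suc_apply[OF refl] jac_bwd.simps k
    using Suc nn_z_in_Fval
    by (auto intro!: sum_in_intervalI times_in_intervalI ienclosure_R_mem[OF encl_S1])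
qed

lemma hess_bwd_in_hess_steps:
  "x \<in> box_pts (d 0) K \<Longrightarrow> m \<le> L \<Longrightarrow>
    hess_bwd i m x p q \<in> set_of (hess_steps S S1 S2 d W b L i m K p q)"
proof (induction m arbitrary: p q)
  case 0
  then show ?case
    by simp
next
  case (Suc m)
  have k: "L - Suc m + 1 = Suc (L - Suc m)"
    by simp
  have "Jac S S1 d W b L (Suc (L - Suc m)) K = jac_steps S S1 d W b L m K"
    using Suc.prems by (simp add: Jac_def Suc_diff_Suc)
  then show ?case
    unfolding hess_steps_Suc_apply[OF refl] hess_bwd.simps k
    using Suc nn_z_in_Fval jac_bwd_in_jac_steps
    by (auto intro!: plus_in_intervalI sum_in_intervalI times_in_intervalI
        ienclosure_R_mem[OF encl_S1] ienclosure_R_mem[OF encl_S2])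
qed

end

locale holder_interval_network = interval_network +
  assumes holder_S: "holder_R S" and holder_S1: "holder_R S1" and holder_S2: "holder_R S2"
    and input_dim: "0 < d 0"
begin

lemmas holder_isotone_intros =
  holder_isotone_add[OF input_dim] holder_isotone_mult[OF input_dim] holder_isotone_sum[OF input_dim]
  holder_isotone_const

lemma holder_isotone_fval_x: "a < d k \<Longrightarrow> holder_isotone_on (d 0) \<Omega> (\<lambda>K. fval_x S d W b k K a)"
proof (induction k arbitrary: a)
  case 0
  then show ?case
    by (simp add: holder_isotone_coordinate)
next
  case (Suc k)
  then show ?case
    by (simp, intro holder_isotone_compose[OF encl_S holder_S] holder_isotone_intros) auto
qed

lemma holder_isotone_Fval: "holder_isotone_on (d 0) \<Omega> (\<lambda>K. Fval S d W b (Suc k) K a)"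
  unfolding Fval_def by (simp, intro holder_isotone_intros holder_isotone_fval_x) auto

lemma holder_isotone_jac_steps: "holder_isotone_on (d 0) \<Omega> (\<lambda>K. jac_steps S S1 d W b L m K i a)"
proof (induction m arbitrary: i a)
  case 0
  then show ?case
    by (simp add: ireal_mat_def holder_isotone_const)
next
  case (Suc m)
  then show ?case
    unfolding jac_steps_Suc_apply[OF refl]
    using holder_isotone_Fval[simplified]
    by (intro holder_isotone_intros holder_isotone_compose[OF encl_S1 holder_S1]) auto
qed

lemma holder_isotone_hess_steps: "holder_isotone_on (d 0) \<Omega> (\<lambda>K. hess_steps S S1 S2 d W b L i m K p q)"
proof (induction m arbitrary: p q)
  case 0
  then show ?case
    by (simp add: holder_isotone_zero)
next
  case (Suc m)
  then show ?case
    unfolding hess_steps_Suc_apply[OF refl]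
    using holder_isotone_Fval[simplified] holder_isotone_jac_steps
    by (intro holder_isotone_intros holder_isotone_compose[OF encl_S1 holder_S1]
        holder_isotone_compose[OF encl_S2 holder_S2]) (auto simp: Jac_def)
qed

end

section \<open>Multi-indices of order at most two\<close>

definition unit_idx :: "nat \<Rightarrow> nat \<Rightarrow> nat" where
  "unit_idx j = (\<lambda>i. of_bool (i = j))"

definition pair_idx :: "nat \<Rightarrow> nat \<Rightarrow> nat \<Rightarrow> nat" where
  "pair_idx j l = (\<lambda>i. unit_idx j i + unit_idx l i)"

abbreviation ordered_pairs :: "nat \<Rightarrow> (nat \<times> nat) set" where
  "ordered_pairs n \<equiv> {(j, l). j \<le> l \<and> l < n}"

lemma finite_ordered_pairs: "finite (ordered_pairs n)"
  by (rule finite_subset[of _ "{..<n} \<times> {..<n}"]) auto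

lemma Dalpha_zero: "Dalpha n (\<lambda>_. 0) g = g"
proof -
  have "fold (\<lambda>j h. (partial j ^^ (\<lambda>_. 0::nat) j) h) [0..<m] g = g" for m
    by (induction m) simp_all
  then show ?thesis
    by (simp add: Dalpha_def)
qed

lemma Dalpha_unit_idx: "j < n \<Longrightarrow> Dalpha n (unit_idx j) g = partial j g"
proof -
  have "fold (\<lambda>i h. (partial i ^^ unit_idx j i) h) [0..<m] g = (if j < m then partial j g else g)" for m
    by (induction m) (auto simp: unit_idx_def less_Suc_eq)
  then show "j < n \<Longrightarrow> ?thesis"
    by (simp add: Dalpha_def)
qed

text \<open>\<^const>\<open>Dalpha\<close> differentiates in increasing order of the coordinates, so the mixed
  derivative is \<open>\<partial>\<^sub>l \<partial>\<^sub>j\<close> for \<open>j \<le> l\<close>; no symmetry of second derivatives is needed.\<close>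

lemma Dalpha_pair_idx:
  assumes "j \<le> l" "l < n"
  shows "Dalpha n (pair_idx j l) g = partial l (partial j g)"
proof -
  have "fold (\<lambda>i h. (partial i ^^ pair_idx j l i) h) [0..<m] g =
     (if m \<le> j then g else if m \<le> l then partial j g else partial l (partial j g))" for m
  proof (induction m)
    case (Suc m)
    have "pair_idx j l m = of_bool (m = j) + of_bool (m = l)"
      by (simp add: pair_idx_def unit_idx_def)
    then consider "m = j" "m = l" "pair_idx j l m = 2" | "m = j" "m \<noteq> l" "pair_idx j l m = 1"
      | "m \<noteq> j" "m = l" "pair_idx j l m = 1" | "m \<noteq> j" "m \<noteq> l" "pair_idx j l m = 0"
      by fastforce
    then show ?case
      using Suc.IH assms(1) by cases (simp_all add: numeral_2_eq_2)
  qed simp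
  then show ?thesis
    using assms by (simp add: Dalpha_def)
qed

lemma multiidx_one_cases:
  assumes "\<alpha> \<in> multiidx n 1"
  shows "\<alpha> = (\<lambda>_. 0) \<or> (\<exists>j<n. \<alpha> = unit_idx j)"
proof (cases "\<forall>j<n. \<alpha> j = 0")
  case True
  have "\<alpha> i = 0" for i
    using True assms by (cases "i < n") (auto simp: multiidx_def)
  then show ?thesis
    by auto
next
  case False
  then obtain j where j: "j < n" "\<alpha> j \<noteq> 0"
    by auto
  have sum: "(\<Sum>i<n. \<alpha> i) = \<alpha> j + (\<Sum>i\<in>{..<n} - {j}. \<alpha> i)"
    using j by (simp add: sum.remove)
  have "\<alpha> i = 0" if "i < n" "i \<noteq> j" for i
    using member_le_sum[of i "{..<n} - {j}" \<alpha>] that sum assms j by (auto simp: multiidx_def)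
  moreover have "\<alpha> j = 1"
    using sum assms j by (auto simp: multiidx_def)
  ultimately have "\<alpha> = unit_idx j"
    using assms j by (auto simp: multiidx_def unit_idx_def fun_eq_iff not_less[symmetric])
  then show ?thesis
    using j by blast
qed

lemma multiidx_two_cases:
  assumes "\<alpha> \<in> multiidx n 2"
  shows "\<alpha> = (\<lambda>_. 0) \<or> (\<exists>j<n. \<alpha> = unit_idx j) \<or> (\<exists>(j, l) \<in> ordered_pairs n. \<alpha> = pair_idx j l)"
proof (cases "\<forall>j<n. \<alpha> j = 0")
  case True
  have "\<alpha> i = 0" for i
    using True assms by (cases "i < n") (auto simp: multiidx_def)
  then show ?thesis
    by auto
next
  case False
  then obtain j where j: "j < n" "\<alpha> j \<noteq> 0"
    by auto
  define \<beta> where "\<beta> = \<alpha>(j := \<alpha> j - 1)"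
  have "(\<Sum>i<n. \<alpha> i) = \<alpha> j + (\<Sum>i\<in>{..<n} - {j}. \<alpha> i)" "(\<Sum>i<n. \<beta> i) = \<beta> j + (\<Sum>i\<in>{..<n} - {j}. \<beta> i)"
    using j by (simp_all add: sum.remove)
  moreover have "(\<Sum>i\<in>{..<n} - {j}. \<beta> i) = (\<Sum>i\<in>{..<n} - {j}. \<alpha> i)"
    by (intro sum.cong) (auto simp: \<beta>_def)
  ultimately have "\<beta> \<in> multiidx n 1"
    using assms j by (auto simp: multiidx_def \<beta>_def)
  moreover have \<alpha>: "\<alpha> = (\<lambda>i. unit_idx j i + \<beta> i)"
    using j by (auto simp: \<beta>_def unit_idx_def fun_eq_iff)
  ultimately consider "\<beta> = (\<lambda>_. 0)" | l where "l < n" "\<beta> = unit_idx l"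
    using multiidx_one_cases by blast
  then show ?thesis
  proof cases
    case 1
    then show ?thesis
      using \<alpha> j by auto
  next
    case 2
    then have "\<alpha> = pair_idx (min j l) (max j l)"
      using \<alpha> by (auto simp: pair_idx_def min_def max_def)
    then have "\<exists>(a, c) \<in> ordered_pairs n. \<alpha> = pair_idx a c"
      using j 2 by (intro bexI[of _ "(min j l, max j l)"]) auto
    then show ?thesis
      by blast
  qed
qed

lemma unit_idx_in_multiidx: "j < n \<Longrightarrow> unit_idx j \<in> multiidx n k \<longleftrightarrow> 1 \<le> k"
  by (simp add: multiidx_def unit_idx_def)

lemma pair_idx_in_multiidx: "j < n \<Longrightarrow> l < n \<Longrightarrow> pair_idx j l \<in> multiidx n 2"
  by (simp add: multiidx_def pair_idx_def unit_idx_def sum.distrib)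

lemma multiidx_two_eq:
  "multiidx n 2 = insert (\<lambda>_. 0) (unit_idx ` {..<n} \<union> (\<lambda>(j, l). pair_idx j l) ` ordered_pairs n)"
proof (intro equalityI subsetI)
  fix \<alpha> assume "\<alpha> \<in> multiidx n 2"
  then show "\<alpha> \<in> insert (\<lambda>_. 0) (unit_idx ` {..<n} \<union> (\<lambda>(j, l). pair_idx j l) ` ordered_pairs n)"
    using multiidx_two_cases by fast
next
  fix \<alpha> assume "\<alpha> \<in> insert (\<lambda>_. 0) (unit_idx ` {..<n} \<union> (\<lambda>(j, l). pair_idx j l) ` ordered_pairs n)"
  then show "\<alpha> \<in> multiidx n 2"
    using unit_idx_in_multiidx[of _ n 2] pair_idx_in_multiidx[of _ n] by (auto simp: multiidx_def)
qed

lemma unit_idx_inj: "inj unit_idx"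
  by (rule injI) (metis unit_idx_def of_bool_eq_iff)

lemma pair_idx_support: "{i. pair_idx j l i \<noteq> 0} = {j, l}"
  by (auto simp: pair_idx_def unit_idx_def)

lemma pair_idx_inj_on: "inj_on (\<lambda>(j, l). pair_idx j l) (ordered_pairs n)"
proof (rule inj_onI, clarify)
  fix j l j' l' assume "j \<le> l" "j' \<le> l'" and "pair_idx j l = pair_idx j' l'"
  then have "{j, l} = {j', l'}"
    by (metis pair_idx_support)
  with \<open>j \<le> l\<close> \<open>j' \<le> l'\<close> show "j = j' \<and> l = l'"
    by (auto simp: doubleton_eq_iff)
qed

lemma unit_idx_neq_zero: "unit_idx j \<noteq> (\<lambda>_. 0)"
  and pair_idx_neq_zero: "pair_idx j l \<noteq> (\<lambda>_. 0)"
  by (auto simp: fun_eq_iff pair_idx_def unit_idx_def intro!: exI[of _ j])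

lemma pair_idx_neq_unit_idx: "pair_idx j l \<noteq> unit_idx i"
proof
  assume eq: "pair_idx j l = unit_idx i"
  show False
    using fun_cong[OF eq, of j] fun_cong[OF eq, of l]
    by (auto simp: pair_idx_def unit_idx_def of_bool_def split: if_splits)
qed

lemma sum_multiidx_two:
  "(\<Sum>\<alpha>\<in>multiidx n 2. h \<alpha>) =
     h (\<lambda>_. 0) + (\<Sum>j<n. h (unit_idx j)) + (\<Sum>(j, l)\<in>ordered_pairs n. h (pair_idx j l))"
proof -
  have "(\<Sum>\<alpha>\<in>multiidx n 2. h \<alpha>) =
      h (\<lambda>_. 0) + ((\<Sum>\<alpha>\<in>unit_idx ` {..<n}. h \<alpha>) + (\<Sum>\<alpha>\<in>(\<lambda>(j, l). pair_idx j l) ` ordered_pairs n. h \<alpha>))"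
    unfolding multiidx_two_eq
    using finite_ordered_pairs unit_idx_neq_zero pair_idx_neq_zero pair_idx_neq_unit_idx[symmetric]
    by (subst sum.insert, force, force, subst sum.union_disjoint) auto
  also have "\<dots> = h (\<lambda>_. 0) + (\<Sum>j<n. h (unit_idx j)) + (\<Sum>(j, l)\<in>ordered_pairs n. h (pair_idx j l))"
    unfolding sum.reindex[OF pair_idx_inj_on] sum.reindex[OF inj_on_subset[OF unit_idx_inj subset_UNIV]]
    by (simp add: comp_def case_prod_unfold add.assoc)
  finally show ?thesis .
qed

lemma finite_multiidx_two: "finite (multiidx n 2)"
  unfolding multiidx_two_eq using finite_ordered_pairs by simp

section \<open>The integrand and its interval enclosure\<close>

locale sobolev_network =
  twice_differentiable_network s s1 s2 d W b L + holder_interval_network s s1 s2 d W b L S S1 S2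
  for s s1 s2 d W b L S S1 S2
begin

definition sob_integrand :: "real \<Rightarrow> (nat \<Rightarrow> real) \<Rightarrow> real" where
  "sob_integrand p x = (\<Sum>i<d (L + 1). \<bar>nn_z s d W b L x i\<bar> powr p + (\<Sum>j<d 0. \<bar>dz j L x i\<bar> powr p)
      + (\<Sum>(j, l)\<in>ordered_pairs (d 0). \<bar>ddz j l L x i\<bar> powr p))"

lemma nn_component_eq_nn_z: "(\<lambda>u. nn s d W b L u i) = (\<lambda>u. nn_z s d W b L u i)"
  by (simp add: nn_def)

lemma f_sob_eq_sob_integrand: "f_sob (d 0) 2 p (d (L + 1)) (nn s d W b L) = sob_integrand p"
proof
  fix x
  have "(\<Sum>\<alpha>\<in>multiidx (d 0) 2. \<bar>Dalpha (d 0) \<alpha> (\<lambda>u. nn s d W b L u i) x\<bar> powr p)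
     = \<bar>nn_z s d W b L x i\<bar> powr p + (\<Sum>j<d 0. \<bar>dz j L x i\<bar> powr p)
      + (\<Sum>(j, l)\<in>ordered_pairs (d 0). \<bar>ddz j l L x i\<bar> powr p)" for i
    unfolding sum_multiidx_two nn_component_eq_nn_z
    by (auto simp: Dalpha_zero Dalpha_unit_idx Dalpha_pair_idx partial_nn_z partial_dz
        intro!: sum.cong)
  then show "f_sob (d 0) 2 p (d (L + 1)) (nn s d W b L) x = sob_integrand p x"
    unfolding f_sob_def sob_integrand_def by simp
qed

lemma sob_integrand_nonneg: "0 \<le> sob_integrand p x"
  unfolding sob_integrand_def by (intro sum_nonneg add_nonneg_nonneg) (auto simp: case_prod_unfold)

lemma sob_integrand_in_F_enc:
  assumes "x \<in> box_pts (d 0) K" "1 \<le> p"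
  shows "sob_integrand p x \<in> set_of (F_enc S S1 S2 d W b L p K)"
proof -
  have "\<bar>nn_z s d W b L x i\<bar> \<in> set_of (abs_interval (Fval S d W b (L + 1) K i))" for i
    using nn_z_in_Fval[OF assms(1)] by (simp add: abs_in_abs_interval)
  moreover have "\<bar>dz j L x i\<bar> \<in> set_of (abs_interval (Jac S S1 d W b L 0 K i j))" if "j < d 0" for i j
    using jac_bwd_in_jac_steps[OF assms(1), of L] dz_eq_jac_bwd[OF that]
    by (simp add: Jac_def abs_in_abs_interval)
  moreover have "\<bar>ddz j l L x i\<bar> \<in> set_of (abs_interval (Hess S S1 S2 d W b L i 0 K j l))"
    if "j < d 0" "l < d 0" for i j l
    using hess_bwd_in_hess_steps[OF assms(1), of L] ddz_eq_hess_bwd[OF that]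
    by (simp add: Hess_def abs_in_abs_interval)
  ultimately show ?thesis
    unfolding sob_integrand_def F_enc_def using assms(2)
    by (auto intro!: sum_in_intervalI plus_in_intervalI powr_in_ipowr lower_abs_interval_nonneg)
qed

lemma holder_isotone_F_enc:
  assumes "1 \<le> p"
  shows "holder_isotone_on (d 0) \<Omega> (F_enc S S1 S2 d W b L p)"
  unfolding F_enc_def[abs_def] Jac_def Hess_def case_prod_unfold
  using holder_isotone_Fval[simplified] assms
  by (intro holder_isotone_intros holder_isotone_ipowr_abs holder_isotone_jac_steps
      holder_isotone_hess_steps) auto

text \<open>\<open>s2\<close> is only assumed to be the derivative of \<open>s1\<close>; its continuity, needed for that of
  the second derivatives, comes from the Hoelder continuity of its enclosure \<open>S2\<close>.\<close>

lemma continuous_s2: "continuous_on UNIV s2"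
  by (rule continuous_on_if_holder_enclosure[OF encl_S2 holder_S2])

lemma continuous_sob_integrand: "0 < p \<Longrightarrow> continuous_on UNIV (sob_integrand p)"
  unfolding sob_integrand_def[abs_def] case_prod_unfold
  by (intro continuous_intros continuous_on_powr' continuous_nn_z continuous_dz
      continuous_ddz[OF continuous_s2]) auto

lemma continuous_Dalpha_nn:
  assumes "\<alpha> \<in> multiidx (d 0) 2"
  shows "continuous_on UNIV (Dalpha (d 0) \<alpha> (\<lambda>u. nn s d W b L u i))"
  using multiidx_two_cases[OF assms]
  by (auto simp: nn_component_eq_nn_z Dalpha_zero Dalpha_unit_idx Dalpha_pair_idx partial_nn_z partial_dz
      continuous_nn_z continuous_dz continuous_ddz[OF continuous_s2])

end

section \<open>Doerfler marking\<close>

lemma dorfler_step_subset: "M \<subseteq> P \<Longrightarrow> dorfler_step \<eta> P M \<subseteq> P"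
  unfolding dorfler_step_def by auto

lemma dorfler_iter_subset: "(dorfler_step \<eta> P ^^ k) {} \<subseteq> P"
  by (induction k) (auto intro: dorfler_step_subset[THEN subsetD])

lemma dorfler_subset: "dorfler \<theta> \<eta> P \<subseteq> P"
  unfolding dorfler_def by (rule dorfler_iter_subset)

lemma card_dorfler_step_gt:
  assumes "finite P" "M \<subseteq> P" "M \<noteq> P"
  shows "card M < card (dorfler_step \<eta> P M)"
proof -
  have "P - M \<noteq> {}" "finite (P - M)"
    using assms by auto
  then have "Max (\<eta> ` (P - M)) \<in> \<eta> ` (P - M)"
    by (intro Max_in) auto
  then obtain K where "K \<in> P - M" "\<eta> K = Max (\<eta> ` (P - M))"
    by auto
  then have "K \<in> dorfler_step \<eta> P M" "K \<notin> M" "M \<subseteq> dorfler_step \<eta> P M"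
    unfolding dorfler_step_def by auto
  moreover have "finite (dorfler_step \<eta> P M)"
    using dorfler_step_subset[OF assms(2)] assms(1) finite_subset by blast
  ultimately have "M \<subset> dorfler_step \<eta> P M" "finite (dorfler_step \<eta> P M)"
    by blast+
  then show ?thesis
    by (simp add: psubset_card_mono)
qed

lemma card_dorfler_iter_ge: "finite P \<Longrightarrow> min k (card P) \<le> card ((dorfler_step \<eta> P ^^ k) {})"
proof (induction k)
  case (Suc k)
  let ?M = "(dorfler_step \<eta> P ^^ k) {}"
  show ?case
  proof (cases "?M = P")
    case True
    then have "(dorfler_step \<eta> P ^^ Suc k) {} = P"
      using dorfler_step_subset[of P P \<eta>] by (auto simp: dorfler_step_def)
    then show ?thesis
      by simp
  next
    case False
    then have "card ?M < card (dorfler_step \<eta> P ?M)"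
      using card_dorfler_step_gt[OF Suc.prems dorfler_iter_subset] by blast
    then show ?thesis
      using Suc by simp
  qed
qed simp

lemma dorfler_bulk:
  assumes "finite P" "\<And>K. K \<in> P \<Longrightarrow> 0 \<le> \<eta> K" "\<theta> \<le> 1"
  shows "\<theta> * sum \<eta> P \<le> sum \<eta> (dorfler \<theta> \<eta> P)"
proof -
  have "card P \<le> card ((dorfler_step \<eta> P ^^ card P) {})"
    using card_dorfler_iter_ge[OF assms(1), of "card P" \<eta>] by simp
  then have "(dorfler_step \<eta> P ^^ card P) {} = P"
    by (rule card_seteq[OF assms(1) dorfler_iter_subset])
  moreover have "0 \<le> (1 - \<theta>) * sum \<eta> P"
    using assms by (simp add: sum_nonneg)
  then have "\<theta> * sum \<eta> P \<le> sum \<eta> P"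
    by (simp add: algebra_simps)
  ultimately have "\<exists>k. \<theta> * sum \<eta> P \<le> sum \<eta> ((dorfler_step \<eta> P ^^ k) {})"
    by (intro exI[of _ "card P"]) simp
  then show ?thesis
    unfolding dorfler_def by (rule LeastI_ex)
qed

section \<open>Uniform subdivision of a box\<close>

definition nondegenerate_box :: "nat \<Rightarrow> ibox \<Rightarrow> bool" where
  "nondegenerate_box n K \<longleftrightarrow> (\<forall>j<n. lower (K j) < upper (K j))"

definition box_interior :: "nat \<Rightarrow> ibox \<Rightarrow> (nat \<Rightarrow> real) set" where
  "box_interior n K = {x. \<forall>j<n. lower (K j) < x j \<and> x j < upper (K j)}"

lemma box_interior_mono: "box_sub n K K' \<Longrightarrow> box_interior n K \<subseteq> box_interior n K'"
  unfolding box_sub_def box_interior_def set_of_subset_iff by fastforce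

lemma box_vol_pos: "nondegenerate_box n K \<Longrightarrow> 0 < box_vol n K"
  unfolding box_vol_def nondegenerate_box_def width_def by (intro prod_pos) auto

lemma box_vol_nonneg: "0 \<le> box_vol n K"
  unfolding box_vol_def by (intro prod_nonneg) auto

lemma eta_nonneg: "0 \<le> eta n F K"
  unfolding eta_def using box_vol_nonneg by simp

definition subdiv_box :: "nat \<Rightarrow> (nat \<Rightarrow> nat) \<Rightarrow> ibox \<Rightarrow> (nat \<Rightarrow> nat) \<Rightarrow> ibox" where
  "subdiv_box n m K t = (\<lambda>i. if i < n
     then Ivl (lower (K i) + real (t i) * width (K i) / real (m i))
              (lower (K i) + real (t i + 1) * width (K i) / real (m i))
     else K i)"

lemma
  assumes "i < n"
  shows lower_subdiv_box: "lower (subdiv_box n m K t i) = lower (K i) + real (t i) * width (K i) / real (m i)"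
    and upper_subdiv_box: "upper (subdiv_box n m K t i) = lower (K i) + real (t i + 1) * width (K i) / real (m i)"
proof -
  have "real (t i) * width (K i) / real (m i) \<le> real (t i + 1) * width (K i) / real (m i)"
    by (intro divide_right_mono mult_right_mono) auto
  then show "lower (subdiv_box n m K t i) = lower (K i) + real (t i) * width (K i) / real (m i)"
    "upper (subdiv_box n m K t i) = lower (K i) + real (t i + 1) * width (K i) / real (m i)"
    using assms by (simp_all add: subdiv_box_def lower.rep_eq upper.rep_eq Ivl.rep_eq)
qed

lemma width_subdiv_box: "i < n \<Longrightarrow> width (subdiv_box n m K t i) = width (K i) / real (m i)"
  by (simp add: width_def lower_subdiv_box upper_subdiv_box add_divide_distrib distrib_right)

lemma interval_subdivision_cover:
  fixes lo w x :: real
  assumes "0 < w" "0 < m" "lo \<le> x" "x \<le> lo + w"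
  obtains t where "t < m" "lo + real t * w / real m \<le> x" "x \<le> lo + real (t + 1) * w / real m"
proof -
  define y where "y = (x - lo) * real m / w"
  define t where "t = min (m - 1) (nat \<lfloor>y\<rfloor>)"
  have "(x - lo) * real m \<le> w * real m"
    using assms by (intro mult_right_mono) auto
  then have y: "0 \<le> y" "y \<le> real m"
    using assms by (simp_all add: y_def divide_le_eq)
  have "real t \<le> y"
    using y by (simp add: t_def min_def) linarith
  moreover have "y \<le> real (t + 1)"
  proof (cases "nat \<lfloor>y\<rfloor> \<le> m - 1")
    case True
    then show ?thesis
      using y by (simp add: t_def) linarith
  next
    case False
    then show ?thesis
      using y assms(2) by (simp add: t_def)
  qed
  ultimately have "real t * (w / real m) \<le> x - lo" "x - lo \<le> real (t + 1) * (w / real m)"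
    using assms by (simp_all add: y_def divide_le_eq le_divide_eq mult.commute)
  moreover have "t < m"
    using assms(2) by (simp add: t_def)
  ultimately show ?thesis
    using that by auto
qed

context
  fixes n :: nat and m :: "nat \<Rightarrow> nat" and K :: ibox
  assumes m_pos: "\<forall>i<n. 0 < m i" and K_nondegenerate: "nondegenerate_box n K"
begin

lemma width_box_pos: "i < n \<Longrightarrow> 0 < width (K i)"
  using K_nondegenerate by (simp add: nondegenerate_box_def width_def)

lemma nondegenerate_subdiv_box: "nondegenerate_box n (subdiv_box n m K t)"
  unfolding nondegenerate_box_def
proof (intro allI impI)
  fix i assume i: "i < n"
  have "0 < width (subdiv_box n m K t i)"
    using width_subdiv_box[OF i] width_box_pos[OF i] m_pos i by simp
  then show "lower (subdiv_box n m K t i) < upper (subdiv_box n m K t i)"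
    by (simp add: width_def)
qed

lemma box_sub_subdiv_box:
  assumes "t \<in> PiE {..<n} (\<lambda>i. {..<m i})"
  shows "box_sub n (subdiv_box n m K t) K"
proof -
  have "lower (K i) \<le> lower (subdiv_box n m K t i) \<and> upper (subdiv_box n m K t i) \<le> upper (K i)"
    if i: "i < n" for i
  proof -
    have "t i + 1 \<le> m i"
      using assms i by (auto simp: PiE_iff Suc_le_eq)
    then have "real (t i + 1) * width (K i) / real (m i) \<le> width (K i)"
      using width_box_pos[OF i] by (simp add: divide_le_eq)
    then show ?thesis
      using i width_box_pos[OF i] m_pos by (simp add: lower_subdiv_box upper_subdiv_box width_def)
  qed
  then show ?thesis
    by (auto simp: box_sub_def set_of_eq)
qed

lemma box_interior_subdiv_box_disjoint:
  assumes "t \<in> PiE {..<n} (\<lambda>i. {..<m i})" "t' \<in> PiE {..<n} (\<lambda>i. {..<m i})" "t \<noteq> t'"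
  shows "box_interior n (subdiv_box n m K t) \<inter> box_interior n (subdiv_box n m K t') = {}"
proof -
  obtain i where i: "i < n" "t i \<noteq> t' i"
    using assms by (metis PiE_ext lessThan_iff)
  have separated: "upper (subdiv_box n m K u i) \<le> lower (subdiv_box n m K u' i)" if "u i < u' i" for u u'
    using that i width_box_pos[OF i(1)] m_pos
    by (simp add: lower_subdiv_box upper_subdiv_box divide_right_mono mult_right_mono)
  show ?thesis
  proof (rule equals0I)
    fix x assume "x \<in> box_interior n (subdiv_box n m K t) \<inter> box_interior n (subdiv_box n m K t')"
    then have "lower (subdiv_box n m K t i) < x i" "x i < upper (subdiv_box n m K t i)"
      "lower (subdiv_box n m K t' i) < x i" "x i < upper (subdiv_box n m K t' i)"
      using i by (auto simp: box_interior_def)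
    then show False
      using separated[of t t'] separated[of t' t] i(2) by (cases "t i < t' i") auto
  qed
qed

lemma box_pts_subdiv_cover:
  assumes "x \<in> box_pts n K"
  shows "\<exists>t\<in>PiE {..<n} (\<lambda>i. {..<m i}). x \<in> box_pts n (subdiv_box n m K t)"
proof -
  have "\<exists>t. t < m i \<and> x i \<in> set_of (subdiv_box n m K (\<lambda>_. t) i)" if i: "i < n" for i
  proof -
    have "lower (K i) \<le> x i" "x i \<le> lower (K i) + width (K i)"
      using assms i by (auto simp: box_pts_def set_of_eq width_def)
    then obtain t where "t < m i" "lower (K i) + real t * width (K i) / real (m i) \<le> x i"
      "x i \<le> lower (K i) + real (t + 1) * width (K i) / real (m i)"
      using interval_subdivision_cover width_box_pos[OF i] m_pos i by metis
    then show ?thesis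
      using i by (auto simp: set_of_eq lower_subdiv_box upper_subdiv_box)
  qed
  then obtain t where t: "\<And>i. i < n \<Longrightarrow> t i < m i \<and> x i \<in> set_of (subdiv_box n m K (\<lambda>_. t i) i)"
    by metis
  define t' where "t' = restrict t {..<n}"
  have "subdiv_box n m K t' i = subdiv_box n m K (\<lambda>_. t i) i" if "i < n" for i
    using that by (simp add: subdiv_box_def t'_def)
  then have "x \<in> box_pts n (subdiv_box n m K t')"
    using t by (simp add: box_pts_def)
  moreover have "t' \<in> PiE {..<n} (\<lambda>i. {..<m i})"
    using t by (simp add: t'_def)
  ultimately show ?thesis
    by blast
qed

lemma sum_box_vol_subdiv_box: "(\<Sum>t\<in>PiE {..<n} (\<lambda>i. {..<m i}). box_vol n (subdiv_box n m K t)) = box_vol n K"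
proof -
  have "(\<Sum>t\<in>PiE {..<n} (\<lambda>i. {..<m i}). box_vol n (subdiv_box n m K t))
      = (\<Prod>i<n. real (m i)) * (\<Prod>i<n. width (K i) / real (m i))"
    by (simp add: box_vol_def width_subdiv_box card_PiE)
  also have "\<dots> = box_vol n K"
    unfolding box_vol_def prod.distrib[symmetric] using m_pos by (intro prod.cong) auto
  finally show ?thesis .
qed

end

section \<open>Box partitions and the AdaQuad iteration\<close>

definition box_partition :: "nat \<Rightarrow> ibox \<Rightarrow> ibox set \<Rightarrow> bool" where
  "box_partition n \<Omega> P \<longleftrightarrow> finite P \<and> (\<forall>K\<in>P. box_sub n K \<Omega> \<and> nondegenerate_box n K) \<and>
     (\<forall>K\<in>P. \<forall>K'\<in>P. K \<noteq> K' \<longrightarrow> box_interior n K \<inter> box_interior n K' = {}) \<and>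
     box_pts n \<Omega> \<subseteq> (\<Union>K\<in>P. box_pts n K)"

lemma box_partition_singleton: "nondegenerate_box n \<Omega> \<Longrightarrow> box_partition n \<Omega> {\<Omega>}"
  by (simp add: box_partition_def)

lemma box_partition_subdiv_box:
  assumes "\<forall>i<n. 0 < m i" "nondegenerate_box n K"
  shows "box_partition n K (subdiv_box n m K ` PiE {..<n} (\<lambda>i. {..<m i}))"
proof -
  have "box_interior n (subdiv_box n m K t) \<inter> box_interior n (subdiv_box n m K t') = {}"
    if "t \<in> PiE {..<n} (\<lambda>i. {..<m i})" "t' \<in> PiE {..<n} (\<lambda>i. {..<m i})"
      "subdiv_box n m K t \<noteq> subdiv_box n m K t'" for t t'
    using box_interior_subdiv_box_disjoint[OF assms that(1,2)] that(3) by blast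
  moreover have "box_pts n K \<subseteq> (\<Union>t\<in>PiE {..<n} (\<lambda>i. {..<m i}). box_pts n (subdiv_box n m K t))"
    using box_pts_subdiv_cover[OF assms] by blast
  ultimately show ?thesis
    unfolding box_partition_def
    using box_sub_subdiv_box[OF assms] nondegenerate_subdiv_box[OF assms] by (auto simp: finite_PiE)
qed

lemma box_partition_refine_parent:
  assumes P: "box_partition n \<Omega> P" and "M \<subseteq> P" and R: "\<forall>K\<in>M. box_partition n K (R K)"
    and A: "A \<in> (P - M) \<union> (\<Union>K\<in>M. R K)"
  obtains A0 where "A0 \<in> P" "box_sub n A A0" "nondegenerate_box n A"
    "A0 \<in> M \<Longrightarrow> A \<in> R A0" "A0 \<notin> M \<Longrightarrow> A = A0"
proof (cases "A \<in> P - M")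
  case True
  then show ?thesis
    using P that[of A] by (auto simp: box_partition_def)
next
  case False
  then obtain K where "K \<in> M" "A \<in> R K"
    using A by blast
  then show ?thesis
    using R \<open>M \<subseteq> P\<close> that[of K] by (auto simp: box_partition_def)
qed

lemma box_partition_refine:
  assumes P: "box_partition n \<Omega> P" and "M \<subseteq> P"
    and R: "\<And>K. K \<in> M \<Longrightarrow> box_partition n K (R K)"
  shows "box_partition n \<Omega> ((P - M) \<union> (\<Union>K\<in>M. R K))"
proof -
  let ?P = "(P - M) \<union> (\<Union>K\<in>M. R K)"
  have "\<forall>K\<in>M. box_partition n K (R K)"
    using R by blast
  note parent = box_partition_refine_parent[OF P \<open>M \<subseteq> P\<close> this]
  have "finite P"
    using P by (simp add: box_partition_def)
  then have "finite ?P"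
    using finite_subset[OF \<open>M \<subseteq> P\<close>] R by (auto simp: box_partition_def)
  moreover have "box_sub n A \<Omega> \<and> nondegenerate_box n A" if A: "A \<in> ?P" for A
  proof -
    obtain A0 where "A0 \<in> P" "box_sub n A A0" "nondegenerate_box n A"
      using parent[OF A] by metis
    then show ?thesis
      using P box_sub_trans[of n A A0 \<Omega>] by (simp add: box_partition_def)
  qed
  moreover have "box_interior n A \<inter> box_interior n B = {}" if AB: "A \<in> ?P" "B \<in> ?P" "A \<noteq> B" for A B
  proof -
    obtain A0 where A0: "A0 \<in> P" "box_sub n A A0" "A0 \<in> M \<Longrightarrow> A \<in> R A0" "A0 \<notin> M \<Longrightarrow> A = A0"
      using parent[OF AB(1)] by metis
    obtain B0 where B0: "B0 \<in> P" "box_sub n B B0" "B0 \<in> M \<Longrightarrow> B \<in> R B0" "B0 \<notin> M \<Longrightarrow> B = B0"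
      using parent[OF AB(2)] by metis
    show ?thesis
    proof (cases "A0 = B0")
      case True
      then show ?thesis
        using R[of A0] A0 B0 \<open>A \<noteq> B\<close> unfolding box_partition_def by (cases "A0 \<in> M") auto
    next
      case False
      then have "box_interior n A0 \<inter> box_interior n B0 = {}"
        using P A0(1) B0(1) by (simp add: box_partition_def)
      then show ?thesis
        using box_interior_mono[OF A0(2)] box_interior_mono[OF B0(2)] by blast
    qed
  qed
  moreover have "box_pts n \<Omega> \<subseteq> (\<Union>K\<in>?P. box_pts n K)"
  proof
    fix x assume "x \<in> box_pts n \<Omega>"
    then obtain K where K: "K \<in> P" "x \<in> box_pts n K"
      using P by (auto simp: box_partition_def)
    show "x \<in> (\<Union>K\<in>?P. box_pts n K)"
    proof (cases "K \<in> M")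
      case True
      then show ?thesis
        using R[OF True] K(2) unfolding box_partition_def by blast
    qed (use K in blast)
  qed
  ultimately show ?thesis
    unfolding box_partition_def by blast
qed

lemma sum_refine_le:
  fixes \<eta> :: "'a \<Rightarrow> real"
  assumes "finite P" "M \<subseteq> P" "\<theta> * sum \<eta> P \<le> sum \<eta> M" "\<rho> \<le> 1" "\<And>K. 0 \<le> \<eta> K"
    and R: "\<And>K. K \<in> M \<Longrightarrow> finite (R K)" "\<And>K. K \<in> M \<Longrightarrow> sum \<eta> (R K) \<le> \<rho> * \<eta> K"
  shows "sum \<eta> ((P - M) \<union> (\<Union>K\<in>M. R K)) \<le> (1 - \<theta> * (1 - \<rho>)) * sum \<eta> P"
proof -
  have M: "finite M"
    using assms(1,2) finite_subset by blast
  have "(\<Union>K\<in>M. R K) = snd ` Sigma M R"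
    by force
  then have "sum \<eta> (\<Union>K\<in>M. R K) \<le> sum (\<eta> \<circ> snd) (Sigma M R)"
    using M R(1) assms(5) sum_image_le[of "Sigma M R" \<eta> snd] by simp
  also have "\<dots> = (\<Sum>K\<in>M. sum \<eta> (R K))"
    using sum.Sigma[OF M, of R "\<lambda>_ y. \<eta> y"] R(1) by (simp add: case_prod_unfold)
  also have "\<dots> \<le> \<rho> * sum \<eta> M"
    using R(2) by (simp add: sum_distrib_left sum_mono)
  finally have "sum \<eta> (\<Union>K\<in>M. R K) \<le> \<rho> * sum \<eta> M" .
  moreover have "sum \<eta> ((P - M) \<union> (\<Union>K\<in>M. R K)) \<le> sum \<eta> (P - M) + sum \<eta> (\<Union>K\<in>M. R K)"
    using assms(1,5) M R(1) sum_Un[of "P - M" "\<Union>K\<in>M. R K" \<eta>] sum_nonneg[of _ \<eta>] by simp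
  moreover have "sum \<eta> (P - M) = sum \<eta> P - sum \<eta> M"
    using assms(1,2) by (simp add: sum_diff)
  moreover have "(1 - \<rho>) * (\<theta> * sum \<eta> P) \<le> (1 - \<rho>) * sum \<eta> M"
    using assms(3,4) by (intro mult_left_mono) auto
  moreover have "(1 - \<rho>) * sum \<eta> M = sum \<eta> M - \<rho> * sum \<eta> M"
    and "(1 - \<theta> * (1 - \<rho>)) * sum \<eta> P = sum \<eta> P - (1 - \<rho>) * (\<theta> * sum \<eta> P)"
    by (simp_all add: algebra_simps)
  ultimately show ?thesis
    by linarith
qed

locale holder_refinement =
  fixes n :: nat and \<Omega> :: ibox and F :: "ibox \<Rightarrow> real interval" and C g \<rho> :: real
  assumes dim_pos: "0 < n" and holder: "holder_on n \<Omega> F C g" and \<rho>_pos: "0 < \<rho>"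
begin

abbreviation \<eta> :: "ibox \<Rightarrow> real" where
  "\<eta> \<equiv> eta n F"

abbreviation R :: "ibox \<Rightarrow> ibox set" where
  "R \<equiv> holder_refine n C g \<rho> \<eta>"

lemma holder_bound: "box_sub n K \<Omega> \<Longrightarrow> width (F K) \<le> C * box_width n K powr g"
  and holder_exponent_pos: "0 < g"
  using holder by (auto simp: holder_on_def)

text \<open>The number of pieces \<open>divisions K i\<close> is chosen so that, by the Hoelder bound, every
  child's indicator is at most \<open>\<rho>\<close> times its volume share of \<open>\<eta> K\<close>.\<close>

definition refine_scale :: "ibox \<Rightarrow> real" where
  "refine_scale K = C * box_vol n K / (\<rho> * \<eta> K)"

definition divisions :: "ibox \<Rightarrow> nat \<Rightarrow> nat" where
  "divisions K i = nat \<lceil>width (K i) * refine_scale K powr (1 / g)\<rceil>"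

lemma holder_refine_zero: "\<eta> K = 0 \<Longrightarrow> R K = {K}"
  unfolding holder_refine_def by (rule if_P)

lemma holder_refine_eq_subdiv:
  "\<eta> K \<noteq> 0 \<Longrightarrow> R K = subdiv_box n (divisions K) K ` PiE {..<n} (\<lambda>i. {..<divisions K i})"
  unfolding holder_refine_def subdiv_box_def[abs_def] divisions_def[abs_def] refine_scale_def
  by (simp add: Let_def)

lemma refine_scale_pos:
  assumes "box_sub n K \<Omega>" "nondegenerate_box n K" "\<eta> K \<noteq> 0"
  shows "0 < refine_scale K"
proof -
  have "width (F K) \<noteq> 0"
    using assms(3) by (simp add: eta_def)
  then have "0 < width (F K)"
    using width_nonneg[of "F K"] by (simp add: order_less_le)
  then have "0 < C * box_width n K powr g"
    using holder_bound[OF assms(1)] by linarith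
  then have "0 < C"
    using holder by (auto simp: holder_on_def zero_less_mult_iff)
  then show ?thesis
    using box_vol_pos[OF assms(2)] \<rho>_pos assms(3) eta_nonneg[of n F K] by (simp add: refine_scale_def)
qed

lemma divisions_ge: "width (K i) * refine_scale K powr (1 / g) \<le> real (divisions K i)"
  using le_of_int_ceiling[of "width (K i) * refine_scale K powr (1 / g)"] by (simp add: divisions_def)

lemma divisions_pos:
  assumes "box_sub n K \<Omega>" "nondegenerate_box n K" "\<eta> K \<noteq> 0"
  shows "\<forall>i<n. 0 < divisions K i"
proof (intro allI impI)
  fix i assume "i < n"
  then have "0 < width (K i) * refine_scale K powr (1 / g)"
    using assms(2) refine_scale_pos[OF assms] by (simp add: nondegenerate_box_def width_def)
  then show "0 < divisions K i"
    by (simp add: divisions_def)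
qed

lemma box_partition_holder_refine:
  assumes "box_sub n K \<Omega>" "nondegenerate_box n K"
  shows "box_partition n K (R K)"
proof (cases "\<eta> K = 0")
  case True
  then show ?thesis
    using box_partition_singleton[OF assms(2)] by (simp add: holder_refine_zero)
next
  case False
  then show ?thesis
    using box_partition_subdiv_box[OF divisions_pos[OF assms False] assms(2)]
    by (simp add: holder_refine_eq_subdiv)
qed

lemma eta_subdiv_box_le:
  assumes K: "box_sub n K \<Omega>" "nondegenerate_box n K" "\<eta> K \<noteq> 0"
    and t: "t \<in> PiE {..<n} (\<lambda>i. {..<divisions K i})"
  shows "\<eta> (subdiv_box n (divisions K) K t) \<le> (\<rho> * \<eta> K / box_vol n K) * box_vol n (subdiv_box n (divisions K) K t)"
proof -
  let ?A = "refine_scale K" and ?K' = "subdiv_box n (divisions K) K t"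
  have A: "0 < ?A"
    by (rule refine_scale_pos[OF K])
  have "width (?K' i) \<le> ?A powr (- (1 / g))" if i: "i < n" for i
  proof -
    have wK: "0 < width (K i)"
      using K(2) i by (simp add: nondegenerate_box_def width_def)
    have "width (?K' i) = width (K i) / real (divisions K i)"
      by (rule width_subdiv_box[OF i])
    also have "\<dots> \<le> width (K i) / (width (K i) * ?A powr (1 / g))"
      using wK A by (intro frac_le divisions_ge) auto
    also have "\<dots> = ?A powr (- (1 / g))"
      using wK by (simp add: powr_minus_divide)
    finally show ?thesis .
  qed
  then have "box_width n ?K' \<le> ?A powr (- (1 / g))"
    unfolding box_width_def using dim_pos by (intro Max.boundedI) auto
  then have "box_width n ?K' powr g \<le> (?A powr (- (1 / g))) powr g"
    using box_width_nonneg[OF dim_pos] holder_exponent_pos by (intro powr_mono2) auto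
  also have "\<dots> = 1 / ?A"
    using holder_exponent_pos A by (subst powr_powr) (simp add: powr_minus_divide)
  finally have "C * box_width n ?K' powr g \<le> C * (1 / ?A)"
    using holder by (intro mult_left_mono) (auto simp: holder_on_def)
  also have "C * (1 / ?A) = \<rho> * \<eta> K / box_vol n K"
    using A box_vol_pos[OF K(2)] by (auto simp: refine_scale_def field_simps)
  finally have "width (F ?K') \<le> \<rho> * \<eta> K / box_vol n K"
    using holder_bound[OF box_sub_trans[OF box_sub_subdiv_box[OF divisions_pos[OF K] K(2) t] K(1)]]
    by linarith
  then show ?thesis
    unfolding eta_def by (intro mult_right_mono box_vol_nonneg)
qed

lemma sum_eta_holder_refine_le:
  assumes K: "box_sub n K \<Omega>" "nondegenerate_box n K"
  shows "sum \<eta> (R K) \<le> \<rho> * \<eta> K"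
proof (cases "\<eta> K = 0")
  case True
  then show ?thesis
    by (simp add: holder_refine_zero)
next
  case False
  let ?T = "PiE {..<n} (\<lambda>i. {..<divisions K i})" and ?c = "\<rho> * \<eta> K / box_vol n K"
  have "sum \<eta> (R K) \<le> (\<Sum>t\<in>?T. \<eta> (subdiv_box n (divisions K) K t))"
    unfolding holder_refine_eq_subdiv[OF False]
    by (rule order.trans[OF sum_image_le]) (auto simp: eta_nonneg finite_PiE)
  also have "\<dots> \<le> (\<Sum>t\<in>?T. ?c * box_vol n (subdiv_box n (divisions K) K t))"
    using eta_subdiv_box_le[OF K False] by (rule sum_mono)
  also have "\<dots> = \<rho> * \<eta> K"
    using box_vol_pos[OF K(2)]
    by (subst sum_distrib_left[symmetric]) (simp add: sum_box_vol_subdiv_box[OF divisions_pos[OF K False] K(2)])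
  finally show ?thesis .
qed

context
  fixes \<theta> :: real
begin

abbreviation adaquad :: "nat \<Rightarrow> ibox set" where
  "adaquad \<equiv> adaquad_part (dorfler \<theta> \<eta>) R \<Omega>"

lemma adaquad_Suc:
  "adaquad (Suc k) = (adaquad k - dorfler \<theta> \<eta> (adaquad k)) \<union> (\<Union>K\<in>dorfler \<theta> \<eta> (adaquad k). R K)"
  by (simp add: Let_def)

lemma box_partition_adaquad:
  assumes "nondegenerate_box n \<Omega>"
  shows "box_partition n \<Omega> (adaquad k)"
proof (induction k)
  case 0
  then show ?case
    using assms by (simp add: box_partition_singleton)
next
  case (Suc k)
  have "box_partition n K (R K)" if "K \<in> dorfler \<theta> \<eta> (adaquad k)" for K
  proof -
    have "K \<in> adaquad k"
      using dorfler_subset[THEN subsetD, OF that] .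
    then show ?thesis
      using Suc by (intro box_partition_holder_refine) (auto simp: box_partition_def)
  qed
  then show ?case
    unfolding adaquad_Suc by (rule box_partition_refine[OF Suc dorfler_subset])
qed

lemma adaquad_contraction:
  assumes "nondegenerate_box n \<Omega>" "\<theta> \<le> 1" "\<rho> \<le> 1"
  shows "sum \<eta> (adaquad (Suc k)) \<le> (1 - \<theta> * (1 - \<rho>)) * sum \<eta> (adaquad k)"
proof -
  let ?P = "adaquad k" and ?M = "dorfler \<theta> \<eta> (adaquad k)"
  have P: "box_partition n \<Omega> ?P"
    by (rule box_partition_adaquad[OF assms(1)])
  have M: "box_sub n K \<Omega>" "nondegenerate_box n K" if "K \<in> ?M" for K
    using P dorfler_subset[THEN subsetD, OF that] by (auto simp: box_partition_def)
  have "sum \<eta> ((?P - ?M) \<union> (\<Union>K\<in>?M. R K)) \<le> (1 - \<theta> * (1 - \<rho>)) * sum \<eta> ?P"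
  proof (rule sum_refine_le)
    show "finite ?P"
      using P by (simp add: box_partition_def)
    then show "\<theta> * sum \<eta> ?P \<le> sum \<eta> ?M"
      using assms(2) eta_nonneg by (intro dorfler_bulk)
    show "finite (R K)" if "K \<in> ?M" for K
      using box_partition_holder_refine[OF M[OF that]] by (simp add: box_partition_def)
    show "sum \<eta> (R K) \<le> \<rho> * \<eta> K" if "K \<in> ?M" for K
      by (rule sum_eta_holder_refine_le[OF M[OF that]])
  qed (simp_all add: assms(3) dorfler_subset eta_nonneg)
  then show ?thesis
    unfolding adaquad_Suc .
qed

end

end

section \<open>Integration over boxes\<close>

definition box_set :: "nat \<Rightarrow> ibox \<Rightarrow> (nat \<Rightarrow> real) set" where
  "box_set n K = PiE {..<n} (\<lambda>j. set_of (K j))"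

lemma space_lebesgue_n: "space (lebesgue_n n) = PiE {..<n} (\<lambda>_. UNIV)"
  by (simp add: lebesgue_n_def space_PiM)

lemma box_pts_iff_box_set: "x \<in> space (lebesgue_n n) \<Longrightarrow> x \<in> box_pts n K \<longleftrightarrow> x \<in> box_set n K"
  unfolding space_lebesgue_n box_set_def box_pts_def PiE_iff by auto

lemma indicator_box_pts_eq:
  "x \<in> space (lebesgue_n n) \<Longrightarrow> indicator (box_pts n K) x = (indicator (box_set n K) x :: real)"
  using box_pts_iff_box_set by (simp add: indicator_def)

lemma sets_box_set [measurable]: "box_set n K \<in> sets (lebesgue_n n)"
  unfolding box_set_def lebesgue_n_def by (intro sets_PiM_I_finite) (auto simp: set_of_eq)

lemma emeasure_box_set: "emeasure (lebesgue_n n) (box_set n K) = ennreal (box_vol n K)"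
proof -
  interpret product_sigma_finite "\<lambda>_::nat. lborel"
    by standard
  have "emeasure (lebesgue_n n) (box_set n K) = (\<Prod>j<n. emeasure lborel (set_of (K j)))"
    unfolding lebesgue_n_def box_set_def by (rule emeasure_PiM) (auto simp: set_of_eq)
  also have "\<dots> = ennreal (box_vol n K)"
    by (simp add: set_of_eq width_def box_vol_def prod_ennreal)
  finally show ?thesis .
qed

lemma measure_box_set: "measure (lebesgue_n n) (box_set n K) = box_vol n K"
  using emeasure_box_set box_vol_nonneg by (simp add: measure_def)

lemma borel_measurable_lebesgue_n_component: "(\<lambda>x. x j) \<in> borel_measurable (lebesgue_n n)"
proof (cases "j < n")
  case True
  then have "(\<lambda>x. x j) \<in> measurable (lebesgue_n n) lborel"
    unfolding lebesgue_n_def by (intro measurable_component_singleton) auto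
  then show ?thesis
    using measurable_cong_sets[OF refl sets_lborel] by simp
next
  case False
  have "x j = undefined" if "x \<in> space (lebesgue_n n)" for x
    using that False by (auto simp: space_lebesgue_n PiE_def extensional_def)
  then show ?thesis
    using measurable_cong[of "lebesgue_n n" "\<lambda>x. x j" "\<lambda>x. undefined"] by simp
qed

lemma borel_measurable_continuous_lebesgue_n:
  "continuous_on UNIV g \<Longrightarrow> (g :: (nat \<Rightarrow> real) \<Rightarrow> real) \<in> borel_measurable (lebesgue_n n)"
  using measurable_compose[OF measurable_coordinatewise_then_product[OF borel_measurable_lebesgue_n_component]
      borel_measurable_continuous_onI]
  by simp

lemma borel_measurable_indicator_box:
  assumes "g \<in> borel_measurable (lebesgue_n n)"
  shows "(\<lambda>x. indicator (box_pts n K) x * g x :: real) \<in> borel_measurable (lebesgue_n n)"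
proof -
  have "(\<lambda>x. indicator (box_set n K) x * g x :: real) \<in> borel_measurable (lebesgue_n n)"
    using assms by measurable
  then show ?thesis
    by (rule measurable_cong[THEN iffD1, rotated]) (simp add: indicator_box_pts_eq)
qed

lemma integrable_indicator_box:
  assumes g: "g \<in> borel_measurable (lebesgue_n n)" and bnd: "\<And>x. x \<in> box_pts n K \<Longrightarrow> \<bar>g x\<bar> \<le> (B::real)"
  shows "integrable (lebesgue_n n) (\<lambda>x. indicator (box_pts n K) x * g x)"
proof -
  have "integrable (lebesgue_n n) (\<lambda>x. indicator (box_set n K) x * g x)"
  proof (rule Bochner_Integration.integrable_bound)
    show "integrable (lebesgue_n n) (\<lambda>x. indicator (box_set n K) x * B)"
      using emeasure_box_set by (intro integrable_mult_left integrable_real_indicator) auto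
    show "AE x in lebesgue_n n. norm (indicator (box_set n K) x * g x) \<le> norm (indicator (box_set n K) x * B)"
    proof (rule AE_I2)
      fix x assume x: "x \<in> space (lebesgue_n n)"
      show "norm (indicator (box_set n K) x * g x) \<le> norm (indicator (box_set n K) x * B)"
      proof (cases "x \<in> box_set n K")
        case True
        then have "\<bar>g x\<bar> \<le> B"
          using bnd box_pts_iff_box_set[OF x] by blast
        then show ?thesis
          using True by simp
      qed simp
    qed
  qed (use g in measurable)
  then show ?thesis
    by (rule Bochner_Integration.integrable_cong[OF refl, THEN iffD2, rotated])
      (simp add: indicator_box_pts_eq)
qed

lemma integral_indicator_box_bounds:
  assumes g: "g \<in> borel_measurable (lebesgue_n n)"
    and bnd: "\<And>x. x \<in> box_pts n K \<Longrightarrow> lo \<le> g x \<and> g x \<le> hi"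
  shows "lo * box_vol n K \<le> integral\<^sup>L (lebesgue_n n) (\<lambda>x. indicator (box_pts n K) x * g x)"
    and "integral\<^sup>L (lebesgue_n n) (\<lambda>x. indicator (box_pts n K) x * g x) \<le> hi * box_vol n K"
proof -
  have int: "integrable (lebesgue_n n) (\<lambda>x. indicator (box_pts n K) x * g x)"
    using bnd by (intro integrable_indicator_box[OF g, of K "\<bar>lo\<bar> + \<bar>hi\<bar>"]) force
  have const: "integrable (lebesgue_n n) (\<lambda>x. indicator (box_set n K) x * c)" for c :: real
    using emeasure_box_set by (intro integrable_mult_left integrable_real_indicator) auto
  have "integral\<^sup>L (lebesgue_n n) (\<lambda>x. indicator (box_set n K) x * lo)
      \<le> integral\<^sup>L (lebesgue_n n) (\<lambda>x. indicator (box_pts n K) x * g x)"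
    using bnd box_pts_iff_box_set
    by (intro Bochner_Integration.integral_mono[OF const int]) (auto simp: indicator_def)
  then show "lo * box_vol n K \<le> integral\<^sup>L (lebesgue_n n) (\<lambda>x. indicator (box_pts n K) x * g x)"
    by (simp add: measure_box_set mult.commute)
  have "integral\<^sup>L (lebesgue_n n) (\<lambda>x. indicator (box_pts n K) x * g x)
      \<le> integral\<^sup>L (lebesgue_n n) (\<lambda>x. indicator (box_set n K) x * hi)"
    using bnd box_pts_iff_box_set
    by (intro Bochner_Integration.integral_mono[OF int const]) (auto simp: indicator_def)
  then show "integral\<^sup>L (lebesgue_n n) (\<lambda>x. indicator (box_pts n K) x * g x) \<le> hi * box_vol n K"
    by (simp add: measure_box_set mult.commute)
qed

lemma AE_lebesgue_n_component_neq: "j < n \<Longrightarrow> AE x in lebesgue_n n. x j \<noteq> c"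
proof -
  assume j: "j < n"
  interpret product_sigma_finite "\<lambda>_::nat. lborel"
    by standard
  define N where "N = PiE {..<n} (\<lambda>i. if i = j then {c} else UNIV)"
  have "N \<in> sets (lebesgue_n n)"
    unfolding N_def lebesgue_n_def by (intro sets_PiM_I_finite) auto
  moreover have "emeasure (lebesgue_n n) N = (\<Prod>i<n. emeasure lborel (if i = j then {c} else UNIV))"
    unfolding lebesgue_n_def N_def by (rule emeasure_PiM) auto
  moreover have "\<dots> = 0"
    using j by (intro prod_zero) auto
  moreover have "{x \<in> space (lebesgue_n n). \<not> x j \<noteq> c} \<subseteq> N"
    unfolding N_def space_lebesgue_n PiE_iff extensional_def by auto
  ultimately show ?thesis
    by (intro AE_I') auto
qed

lemma mem_box_interior_off_faces:
  assumes "x \<in> box_pts n K" "\<forall>j\<in>{..<n}. x j \<noteq> lower (K j) \<and> x j \<noteq> upper (K j)"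
  shows "x \<in> box_interior n K"
proof -
  have "lower (K j) < x j \<and> x j < upper (K j)" if "j < n" for j
  proof -
    have "x j \<in> set_of (K j)"
      using assms(1) that by (simp add: box_pts_def)
    moreover have "x j \<noteq> lower (K j)" "x j \<noteq> upper (K j)"
      using assms(2) that by auto
    ultimately show ?thesis
      by (auto simp: set_of_eq)
  qed
  then show ?thesis
    by (simp add: box_interior_def)
qed

text \<open>The boxes of a partition overlap only on their faces, which are null sets; off the faces
  every point of \<open>\<Omega>\<close> lies in exactly one box.\<close>

lemma indicator_box_partition:
  assumes P: "box_partition n \<Omega> P"
    and off_faces: "\<forall>K\<in>P. \<forall>j\<in>{..<n}. x j \<noteq> lower (K j) \<and> x j \<noteq> upper (K j)"
  shows "indicator (box_pts n \<Omega>) x = (\<Sum>K\<in>P. indicator (box_pts n K) x :: real)"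
proof (cases "x \<in> box_pts n \<Omega>")
  case True
  then obtain K0 where K0: "K0 \<in> P" "x \<in> box_pts n K0"
    using P by (auto simp: box_partition_def)
  have "x \<notin> box_pts n K" if "K \<in> P" "K \<noteq> K0" for K
  proof
    assume "x \<in> box_pts n K"
    then have "x \<in> box_interior n K \<inter> box_interior n K0"
      using that(1) K0 off_faces mem_box_interior_off_faces by blast
    then show False
      using that K0(1) P by (auto simp: box_partition_def)
  qed
  then have "(\<Sum>K\<in>P. indicator (box_pts n K) x :: real) = (\<Sum>K\<in>P. if K = K0 then 1 else 0)"
    using K0 by (intro sum.cong) auto
  then show ?thesis
    using True K0(1) P by (simp add: box_partition_def)
next
  case False
  then have "x \<notin> box_pts n K" if "K \<in> P" for K
    using P that by (auto simp: box_partition_def box_sub_def box_pts_def)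
  then show ?thesis
    using False by simp
qed

lemma integral_box_partition:
  assumes P: "box_partition n \<Omega> P" and g: "g \<in> borel_measurable (lebesgue_n n)"
    and bnd: "\<And>x. x \<in> box_pts n \<Omega> \<Longrightarrow> \<bar>g x\<bar> \<le> (B::real)"
  shows "integral\<^sup>L (lebesgue_n n) (\<lambda>x. indicator (box_pts n \<Omega>) x * g x)
       = (\<Sum>K\<in>P. integral\<^sup>L (lebesgue_n n) (\<lambda>x. indicator (box_pts n K) x * g x))"
proof -
  have fin: "finite P" and sub: "\<And>K. K \<in> P \<Longrightarrow> box_pts n K \<subseteq> box_pts n \<Omega>"
    using P by (auto simp: box_partition_def box_sub_def box_pts_def)
  have "AE x in lebesgue_n n. \<forall>K\<in>P. \<forall>j\<in>{..<n}. x j \<noteq> lower (K j) \<and> x j \<noteq> upper (K j)"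
    using fin AE_lebesgue_n_component_neq by (intro AE_finite_allI AE_conjI) auto
  then have "integral\<^sup>L (lebesgue_n n) (\<lambda>x. indicator (box_pts n \<Omega>) x * g x)
      = integral\<^sup>L (lebesgue_n n) (\<lambda>x. \<Sum>K\<in>P. indicator (box_pts n K) x * g x)"
    using indicator_box_partition[OF P] borel_measurable_indicator_box[OF g]
    by (intro integral_cong_AE borel_measurable_sum) (auto elim!: AE_mp simp: sum_distrib_right)
  also have "\<dots> = (\<Sum>K\<in>P. integral\<^sup>L (lebesgue_n n) (\<lambda>x. indicator (box_pts n K) x * g x))"
    using sub bnd by (intro Bochner_Integration.integral_sum integrable_indicator_box[OF g]) blast
  finally show ?thesis .
qed

lemma sum_list_mult_const: "(\<Sum>(w, x)\<leftarrow>xs. w * c) = (\<Sum>(w, x)\<leftarrow>xs. w) * (c::real)"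
  by (induction xs) (auto simp: algebra_simps)

lemma quad_bounds:
  assumes Q: "is_quad_rule n \<Omega> Q" and K: "box_sub n K \<Omega>"
    and f: "\<And>x. x \<in> box_pts n K \<Longrightarrow> f x \<in> set_of X"
  shows "lower X * box_vol n K \<le> quad Q f K" "quad Q f K \<le> upper X * box_vol n K"
proof -
  have q: "\<forall>(w, x)\<in>set (Q K). 0 < w \<and> x \<in> box_pts n K" "(\<Sum>(w, x)\<leftarrow>Q K. w) = box_vol n K"
    using Q K unfolding is_quad_rule_def by blast+
  have "(\<Sum>(w, x)\<leftarrow>Q K. w * lower X) \<le> (\<Sum>(w, x)\<leftarrow>Q K. w * f x)"
    and "(\<Sum>(w, x)\<leftarrow>Q K. w * f x) \<le> (\<Sum>(w, x)\<leftarrow>Q K. w * upper X)"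
    using q(1) f by (auto simp: set_of_eq intro!: sum_list_mono mult_left_mono)
  then show "lower X * box_vol n K \<le> quad Q f K" "quad Q f K \<le> upper X * box_vol n K"
    unfolding quad_def sum_list_mult_const q(2) by (simp_all add: mult.commute)
qed

lemma quadrature_error_le:
  assumes P: "box_partition n \<Omega> P" and Q: "is_quad_rule n \<Omega> Q"
    and g: "g \<in> borel_measurable (lebesgue_n n)" and bnd: "\<And>x. x \<in> box_pts n \<Omega> \<Longrightarrow> \<bar>g x\<bar> \<le> B"
    and encl: "\<And>K x. box_sub n K \<Omega> \<Longrightarrow> x \<in> box_pts n K \<Longrightarrow> g x \<in> set_of (F K)"
  shows "\<bar>integral\<^sup>L (lebesgue_n n) (\<lambda>x. indicator (box_pts n \<Omega>) x * g x) - (\<Sum>K\<in>P. quad Q g K)\<bar>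
     \<le> (\<Sum>K\<in>P. eta n F K)"
proof -
  have "\<bar>integral\<^sup>L (lebesgue_n n) (\<lambda>x. indicator (box_pts n K) x * g x) - quad Q g K\<bar> \<le> eta n F K"
    if "K \<in> P" for K
  proof -
    have K: "box_sub n K \<Omega>"
      using P that by (simp add: box_partition_def)
    have bnd: "lower (F K) \<le> g x \<and> g x \<le> upper (F K)" if "x \<in> box_pts n K" for x
      using encl[OF K that] by (simp add: set_of_eq)
    have "lower (F K) * box_vol n K \<le> integral\<^sup>L (lebesgue_n n) (\<lambda>x. indicator (box_pts n K) x * g x)"
      "integral\<^sup>L (lebesgue_n n) (\<lambda>x. indicator (box_pts n K) x * g x) \<le> upper (F K) * box_vol n K"
      by (rule integral_indicator_box_bounds[OF g], erule bnd)+
    moreover have "lower (F K) * box_vol n K \<le> quad Q g K" "quad Q g K \<le> upper (F K) * box_vol n K"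
      by (rule quad_bounds[OF Q K], erule encl[OF K])+
    moreover have "eta n F K = upper (F K) * box_vol n K - lower (F K) * box_vol n K"
      by (simp add: eta_def width_def algebra_simps)
    ultimately show ?thesis
      unfolding abs_le_iff by linarith
  qed
  then have "(\<Sum>K\<in>P. \<bar>integral\<^sup>L (lebesgue_n n) (\<lambda>x. indicator (box_pts n K) x * g x) - quad Q g K\<bar>)
      \<le> (\<Sum>K\<in>P. eta n F K)"
    by (rule sum_mono)
  moreover have "\<bar>integral\<^sup>L (lebesgue_n n) (\<lambda>x. indicator (box_pts n \<Omega>) x * g x) - (\<Sum>K\<in>P. quad Q g K)\<bar>
      = \<bar>\<Sum>K\<in>P. integral\<^sup>L (lebesgue_n n) (\<lambda>x. indicator (box_pts n K) x * g x) - quad Q g K\<bar>"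
    by (simp add: integral_box_partition[OF P g bnd] sum_subtractf)
  ultimately show ?thesis
    using sum_abs[of "\<lambda>K. integral\<^sup>L (lebesgue_n n) (\<lambda>x. indicator (box_pts n K) x * g x) - quad Q g K" P]
    by linarith
qed

lemma quad_nonneg:
  assumes "is_quad_rule n \<Omega> Q" "box_sub n K \<Omega>" "\<And>x. 0 \<le> f x"
  shows "0 \<le> quad Q f K"
proof -
  have "\<forall>(w, x)\<in>set (Q K). 0 < w"
    using assms(1,2) unfolding is_quad_rule_def by fast
  then show ?thesis
    unfolding quad_def using assms(3) by (intro sum_list_nonneg) (auto intro: mult_nonneg_nonneg)
qed

lemma integral_indicator_box_sum:
  assumes "finite I" "\<And>i. i \<in> I \<Longrightarrow> g i \<in> borel_measurable (lebesgue_n n)"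
    and "\<And>i x. i \<in> I \<Longrightarrow> x \<in> box_pts n K \<Longrightarrow> \<bar>g i x\<bar> \<le> (B::real)"
  shows "(\<Sum>i\<in>I. integral\<^sup>L (lebesgue_n n) (\<lambda>x. indicator (box_pts n K) x * g i x))
    = integral\<^sup>L (lebesgue_n n) (\<lambda>x. indicator (box_pts n K) x * (\<Sum>i\<in>I. g i x))"
  unfolding sum_distrib_left
  by (rule Bochner_Integration.integral_sum[symmetric]) (use assms in \<open>blast intro: integrable_indicator_box\<close>)

section \<open>Roots of sums\<close>

lemma powr_ge_self:
  fixes a r :: real
  assumes "0 \<le> a" "a \<le> 1" "0 < r" "r \<le> 1"
  shows "a \<le> a powr r"
proof (cases "a = 0")
  case False
  then have a: "0 < a"
    using assms by simp
  have "1 \<le> (1 / a) powr (1 - r)"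
    using assms a by (intro ge_one_powr_ge_zero) auto
  also have "(1 / a) powr (1 - r) = a powr (r - 1)"
    using a by (simp add: powr_divide powr_minus_divide[symmetric] powr_minus)
  finally have "a * 1 \<le> a * a powr (r - 1)"
    using a by (intro mult_left_mono) auto
  then show ?thesis
    using a by (simp add: powr_mult_base)
qed simp

lemma powr_add_le:
  fixes x y r :: real
  assumes "0 \<le> x" "0 \<le> y" "0 < r" "r \<le> 1"
  shows "(x + y) powr r \<le> x powr r + y powr r"
proof (cases "x + y = 0")
  case False
  define t where "t = x + y"
  have t: "0 < t"
    using False assms by (simp add: t_def)
  have "x / t \<le> (x / t) powr r" "y / t \<le> (y / t) powr r"
    using assms t by (intro powr_ge_self; simp add: t_def divide_le_eq)+
  moreover have "x / t + y / t = 1"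
    using t by (simp add: t_def add_divide_distrib[symmetric])
  ultimately have "t powr r * 1 \<le> t powr r * ((x / t) powr r + (y / t) powr r)"
    by (intro mult_left_mono) auto
  also have "\<dots> = x powr r + y powr r"
    using t assms by (simp add: distrib_left powr_divide)
  finally show ?thesis
    by (simp add: t_def)
qed (use assms in simp)

lemma abs_powr_diff_le:
  fixes a b r :: real
  assumes "0 \<le> a" "0 \<le> b" "0 < r" "r \<le> 1"
  shows "\<bar>a powr r - b powr r\<bar> \<le> \<bar>a - b\<bar> powr r"
proof -
  have *: "u powr r - v powr r \<le> (u - v) powr r" if "0 \<le> v" "v \<le> u" for u v :: real
    using powr_add_le[of "u - v" v r] assms that by simp
  show ?thesis
  proof (cases "b \<le> a")
    case True
    then show ?thesis
      using *[OF assms(2) True] powr_mono2[of r b a] assms by simp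
  next
    case False
    then show ?thesis
      using *[of a b] powr_mono2[of r a b] assms by (simp add: abs_minus_commute)
  qed
qed

section \<open>The Sobolev norm and its AdaQuad approximation\<close>

context sobolev_network
begin

lemma abs_sob_integrand_le_mag:
  "1 \<le> p \<Longrightarrow> x \<in> box_pts (d 0) \<Omega> \<Longrightarrow> \<bar>sob_integrand p x\<bar> \<le> mag (F_enc S S1 S2 d W b L p \<Omega>)"
  by (rule abs_le_mag[OF sob_integrand_in_F_enc])

lemma Dalpha_term_le_sob_integrand:
  assumes "i < d (L + 1)" "\<alpha> \<in> multiidx (d 0) 2"
  shows "\<bar>Dalpha (d 0) \<alpha> (\<lambda>u. nn s d W b L u i) x\<bar> powr p \<le> sob_integrand p x"
proof -
  let ?h = "\<lambda>i \<alpha>. \<bar>Dalpha (d 0) \<alpha> (\<lambda>u. nn s d W b L u i) x\<bar> powr p"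
  have "?h i \<alpha> \<le> (\<Sum>\<alpha>\<in>multiidx (d 0) 2. ?h i \<alpha>)"
    using assms finite_multiidx_two by (intro member_le_sum) auto
  also have "\<dots> \<le> (\<Sum>i<d (L + 1). \<Sum>\<alpha>\<in>multiidx (d 0) 2. ?h i \<alpha>)"
    using assms(1) by (intro member_le_sum[where f="\<lambda>i. \<Sum>\<alpha>\<in>multiidx (d 0) 2. ?h i \<alpha>"] sum_nonneg) auto
  also have "\<dots> = sob_integrand p x"
    using f_sob_eq_sob_integrand[of p] by (simp add: f_sob_def fun_eq_iff)
  finally show ?thesis .
qed

lemma sum_Times_nested: "(\<Sum>j\<in>A \<times> B. G j) = (\<Sum>i\<in>A. \<Sum>\<alpha>\<in>B. G (i, \<alpha>))"
  by (simp add: sum.cartesian_product case_prod_unfold)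

lemma sobolev_norm_eq_integral:
  assumes p: "1 \<le> p"
  shows "sobolev_norm (d 0) 2 p (d (L + 1)) \<Omega> (nn s d W b L)
    = integral\<^sup>L (lebesgue_n (d 0)) (\<lambda>x. indicator (box_pts (d 0) \<Omega>) x * sob_integrand p x) powr (1 / p)"
proof -
  let ?I = "{..<d (L + 1)} \<times> multiidx (d 0) 2"
  let ?h = "\<lambda>j x. \<bar>Dalpha (d 0) (snd j) (\<lambda>u. nn s d W b L u (fst j)) x\<bar> powr p"
  have "continuous_on UNIV (?h j)" if "j \<in> ?I" for j
    using continuous_Dalpha_nn that p by (intro continuous_on_powr' continuous_intros) auto
  then have "?h j \<in> borel_measurable (lebesgue_n (d 0))" if "j \<in> ?I" for j
    using that by (auto intro: borel_measurable_continuous_lebesgue_n)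
  moreover have "\<bar>?h j x\<bar> \<le> mag (F_enc S S1 S2 d W b L p \<Omega>)"
    if "j \<in> ?I" "x \<in> box_pts (d 0) \<Omega>" for j x
  proof -
    have "\<bar>?h j x\<bar> \<le> sob_integrand p x"
      using Dalpha_term_le_sob_integrand[of "fst j" "snd j" x p] that(1) by (auto simp: mem_Times_iff)
    then show ?thesis
      using abs_le_D1[OF abs_sob_integrand_le_mag[OF p that(2)]] by linarith
  qed
  ultimately have "(\<Sum>j\<in>?I. integral\<^sup>L (lebesgue_n (d 0)) (\<lambda>x. indicator (box_pts (d 0) \<Omega>) x * ?h j x))
      = integral\<^sup>L (lebesgue_n (d 0)) (\<lambda>x. indicator (box_pts (d 0) \<Omega>) x * (\<Sum>j\<in>?I. ?h j x))"
    using finite_multiidx_two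
    by (intro integral_indicator_box_sum[where B = "mag (F_enc S S1 S2 d W b L p \<Omega>)"]) auto
  moreover have "(\<Sum>j\<in>?I. ?h j x) = sob_integrand p x" for x
    using fun_cong[OF f_sob_eq_sob_integrand[of p], of x] by (simp add: f_sob_def sum_Times_nested)
  ultimately show ?thesis
    by (simp add: sobolev_norm_def sum_Times_nested)
qed

lemma sobolev_norm_quadrature_error:
  assumes p: "1 \<le> p" and P: "box_partition (d 0) \<Omega> P" and Q: "is_quad_rule (d 0) \<Omega> Q"
  defines "f \<equiv> f_sob (d 0) 2 p (d (L + 1)) (nn s d W b L)" and "F \<equiv> F_enc S S1 S2 d W b L p"
  shows "\<bar>sobolev_norm (d 0) 2 p (d (L + 1)) \<Omega> (nn s d W b L) - (\<Sum>K\<in>P. quad Q f K) powr (1 / p)\<bar>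
    \<le> (\<Sum>K\<in>P. eta (d 0) F K) powr (1 / p)"
proof -
  define I where "I = integral\<^sup>L (lebesgue_n (d 0)) (\<lambda>x. indicator (box_pts (d 0) \<Omega>) x * sob_integrand p x)"
  have f: "f = sob_integrand p"
    unfolding f_def by (rule f_sob_eq_sob_integrand)
  have "\<bar>I - (\<Sum>K\<in>P. quad Q f K)\<bar> \<le> (\<Sum>K\<in>P. eta (d 0) F K)"
    unfolding I_def f F_def
    using p abs_sob_integrand_le_mag sob_integrand_in_F_enc continuous_sob_integrand
    by (intro quadrature_error_le[OF P Q] borel_measurable_continuous_lebesgue_n) auto
  moreover have "0 \<le> I"
    unfolding I_def by (intro Bochner_Integration.integral_nonneg mult_nonneg_nonneg sob_integrand_nonneg) auto
  moreover have "0 \<le> (\<Sum>K\<in>P. quad Q f K)"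
    using P Q by (intro sum_nonneg quad_nonneg) (auto simp: f box_partition_def sob_integrand_nonneg)
  ultimately have "\<bar>I powr (1 / p) - (\<Sum>K\<in>P. quad Q f K) powr (1 / p)\<bar> \<le> (\<Sum>K\<in>P. eta (d 0) F K) powr (1 / p)"
    using p by (intro order.trans[OF abs_powr_diff_le] powr_mono2) auto
  then show ?thesis
    unfolding I_def sobolev_norm_eq_integral[OF p] .
qed

end

theorem corollary4p19:
  fixes s s1 s2 :: "real \<Rightarrow> real"
    and S S1 S2 :: "real interval \<Rightarrow> real interval"
    and L :: nat and d :: "nat \<Rightarrow> nat"
    and W :: "nat \<Rightarrow> nat \<Rightarrow> nat \<Rightarrow> real" and b :: "nat \<Rightarrow> nat \<Rightarrow> real"
    and p \<theta> \<rho> :: real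
    and \<Omega> :: "nat \<Rightarrow> real interval"
    and Q :: "(nat \<Rightarrow> real interval) \<Rightarrow> (real \<times> (nat \<Rightarrow> real)) list"
  assumes "1 \<le> p" and "0 < \<theta>" and "\<theta> < 1" and "0 < \<rho>" and "\<rho> < 1"
    and "\<forall>k\<le>L + 1. 0 < d k"
    and "\<forall>j<d 0. lower (\<Omega> j) < upper (\<Omega> j)"
    and "\<forall>x. (s has_real_derivative s1 x) (at x)"
    and "\<forall>x. (s1 has_real_derivative s2 x) (at x)"
    and "ienclosure_R S s" and "ienclosure_R S1 s1" and "ienclosure_R S2 s2"
    and "holder_R S" and "holder_R S1" and "holder_R S2"
    and "is_quad_rule (d 0) \<Omega> Q"
  shows
    "continuous_on UNIV (f_sob (d 0) 2 p (d (L + 1)) (nn s d W b L))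
     \<and> enclosure_on (d 0) \<Omega> (f_sob (d 0) 2 p (d (L + 1)) (nn s d W b L)) (F_enc S S1 S2 d W b L p)
     \<and> (\<exists>C g. holder_on (d 0) \<Omega> (F_enc S S1 S2 d W b L p) C g)
     \<and> (\<forall>C g. holder_on (d 0) \<Omega> (F_enc S S1 S2 d W b L p) C g \<longrightarrow>
          (let F = F_enc S S1 S2 d W b L p;
               f = f_sob (d 0) 2 p (d (L + 1)) (nn s d W b L);
               \<eta> = eta (d 0) F;
               P = adaquad_part (dorfler \<theta> \<eta>) (holder_refine (d 0) C g \<rho> \<eta>) \<Omega>
           in \<forall>n. \<bar>sobolev_norm (d 0) 2 p (d (L + 1)) \<Omega> (nn s d W b L)
                    - (\<Sum>K\<in>P n. quad Q f K) powr (1 / p)\<bar> \<le> (\<Sum>K\<in>P n. \<eta> K) powr (1 / p)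
                 \<and> (\<Sum>K\<in>P (Suc n). \<eta> K) \<le> (1 - \<theta> * (1 - \<rho>)) * (\<Sum>K\<in>P n. \<eta> K)))"
proof -
  interpret sobolev_network s s1 s2 d W b L S S1 S2
    using assms by unfold_locales auto
  have F: "holder_isotone_on (d 0) \<Omega> (F_enc S S1 S2 d W b L p)"
    by (rule holder_isotone_F_enc[OF assms(1)])
  have \<Omega>: "nondegenerate_box (d 0) \<Omega>"
    using assms(7) by (simp add: nondegenerate_box_def)
  show ?thesis
    unfolding Let_def
  proof (intro conjI allI impI)
    show "continuous_on UNIV (f_sob (d 0) 2 p (d (L + 1)) (nn s d W b L))"
      unfolding f_sob_eq_sob_integrand using assms(1) by (intro continuous_sob_integrand) simp
    show "enclosure_on (d 0) \<Omega> (f_sob (d 0) 2 p (d (L + 1)) (nn s d W b L)) (F_enc S S1 S2 d W b L p)"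
      unfolding f_sob_eq_sob_integrand enclosure_on_def
      using F sob_integrand_in_F_enc assms(1) by (auto simp: holder_isotone_on_def isotone_on_def)
    show "\<exists>C g. holder_on (d 0) \<Omega> (F_enc S S1 S2 d W b L p) C g"
      using F by (simp add: holder_isotone_on_def)
  next
    fix C g k assume "holder_on (d 0) \<Omega> (F_enc S S1 S2 d W b L p) C g"
    then interpret holder_refinement "d 0" \<Omega> "F_enc S S1 S2 d W b L p" C g \<rho>
      using assms(4,6) by unfold_locales auto
    show "\<bar>sobolev_norm (d 0) 2 p (d (L + 1)) \<Omega> (nn s d W b L)
        - (\<Sum>K\<in>adaquad \<theta> k. quad Q (f_sob (d 0) 2 p (d (L + 1)) (nn s d W b L)) K) powr (1 / p)\<bar>
        \<le> (\<Sum>K\<in>adaquad \<theta> k. \<eta> K) powr (1 / p)"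
      by (rule sobolev_norm_quadrature_error[OF assms(1) box_partition_adaquad[OF \<Omega>] assms(16)])
    show "(\<Sum>K\<in>adaquad \<theta> (Suc k). \<eta> K) \<le> (1 - \<theta> * (1 - \<rho>)) * (\<Sum>K\<in>adaquad \<theta> k. \<eta> K)"
      using adaquad_contraction[OF \<Omega>] assms(3,5) by simp
  qed
qed

end
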